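(* Under the standing assumptions (A) below, let $\Omega'=\{t\in[0,L]:\tau(t)\ne\pm\lambda\}\cup\Omega$. If $I$ is a connected component of $\Omega'$, then $I\setminus\Omega$ is finite.
   Context: Standing assumptions (A): $n\ge2$, $L>0$, $\beta\colon[0,L]\to(0,\infty)$ of bounded variation with $1/\beta$ bounded; $\tau\in W^{1,\infty}((0,L);S^{n-1})$ with $k=\operatorname{ess\,sup}|\tau'|>0$; $\lambda\in S^{n-1}$ and $u\in W^{1,\infty}((0,L);\mathbb{R}^n)\setminus\{0\}$ such that $u'+(u\cdot\tau')\tau=\beta(\lambda-(\lambda\cdot\tau)\tau)$ and $|u|\tau'=ku$ a.e. in $(0,L)$; $f=k|u|$, which then satisfies $f'=\beta\,\lambda\cdot\tau'$ and $f(\tau''+k^2\tau)=\beta k^2\,\mathrm{proj}^\perp_{\tau,\tau'}(\lambda)$ weakly in $(0,L)$ (where $\mathrm{proj}^\perp_{V,W}$ is the orthogonal projection onto the orthogonal complement of $\mathrm{span}\{V,W\}$); $\Omega=\{t\in[0,L]:f(t)>0\}$ (open relative to $[0,L]$); and $\tau(t),\tau'(t),\lambda$ are linearly dependent for every $t\in\Omega$ (note $\tau'$ is continuous on $\Omega$). *)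

theory Defs
  imports "HOL-Analysis.Analysis" "HOL-Probability.Essential_Supremum"
begin

definition bounded_variation_on :: "real set \<Rightarrow> (real \<Rightarrow> real) \<Rightarrow> bool" where
  "bounded_variation_on S g \<longleftrightarrow>
     (\<exists>B. \<forall>xs. sorted xs \<and> set xs \<subseteq> S \<longrightarrow>
        (\<Sum>i<length xs - 1. \<bar>g (xs ! Suc i) - g (xs ! i)\<bar>) \<le> B)"

end

theory Submission
  imports Defs
begin

text \<open>
  Put \<open>f = k\<bar>u\<bar>\<close>, \<open>g = \<lambda> \<bullet> \<tau>\<close> and, where \<open>u \<noteq> 0\<close>, \<open>h = \<lambda> \<bullet> \<tau>'\<close>. Off a null set \<open>g' = h\<close> and
  \<open>f' = \<beta> h\<close>, and the linear dependence of \<open>\<tau>, \<tau>', \<lambda>\<close> with \<open>\<tau> \<perp> \<tau>'\<close> gives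
  \<open>\<lambda> = g \<tau> + (h / k\<^sup>2) \<tau>'\<close>, so \<open>h \<noteq> 0\<close> wherever \<open>\<bar>g\<bar> < 1\<close>. Hence on an arc \<open>(a, b)\<close> of \<open>\<Omega>\<close>
  between two points of \<open>I - \<Omega>\<close>, where \<open>f\<close> vanishes at the ends and \<open>\<bar>g\<bar> < 1\<close>, the tangent
  must pass through \<open>\<lambda>\<close>; comparing \<open>f\<close> with \<open>m g\<close> and \<open>M g\<close>, where \<open>m \<le> \<beta> \<le> M\<close> on \<open>[a, b]\<close>,
  yields \<open>m (1 - g a) \<le> M (1 - g b)\<close> and symmetrically.

  The points of \<open>I - \<Omega>\<close> are isolated, so if there were infinitely many, a monotone chain of
  consecutive ones would converge to some \<open>e \<notin> I\<close>, and \<open>\<tau> e = \<plusminus>\<lambda>\<close> by maximality of the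
  component \<open>I\<close>. Now \<open>\<tau> e = -\<lambda>\<close> contradicts the passage through \<open>\<lambda>\<close> in the nearby arcs, and
  \<open>\<tau> e = \<lambda>\<close> contradicts the estimate: \<open>1 - g > 0\<close> tends to \<open>0\<close> along the chain, while its
  successive ratios are at least \<open>m/M\<close>, whose defects are summable because \<open>\<beta>\<close> has bounded
  variation and is bounded away from \<open>0\<close>.
\<close>

lemma negligible_exception_of_AE_lebesgue_on:
  fixes a b :: real
  assumes "AE t in lebesgue_on {a<..<b}. P t"
  shows "negligible ({a<..<b} - {t. P t})"
proof -
  have "{a<..<b} \<in> sets lebesgue" by simp
  then have "AE t in lebesgue. t \<in> {a<..<b} \<longrightarrow> P t"
    using assms by (simp add: AE_restrict_space_iff)
  then obtain N where "negligible N" "{t. \<not> (t \<in> {a<..<b} \<longrightarrow> P t)} \<subseteq> N"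
    unfolding eventually_ae_filter_negligible by blast
  then show ?thesis
    by (auto intro: negligible_subset[of N] simp: set_diff_eq)
qed

lemma continuous_on_eq_off_negligible:
  fixes F G :: "'a::euclidean_space \<Rightarrow> 'b::real_normed_vector"
  assumes "open W" "negligible N" "continuous_on W F" "continuous_on W G"
    and "\<And>t. t \<in> W - N \<Longrightarrow> F t = G t" and "t \<in> W"
  shows "F t = G t"
proof (rule ccontr)
  assume "F t \<noteq> G t"
  define V where "V = W \<inter> (\<lambda>s. F s - G s) -` (- {0})"
  have "open V"
    unfolding V_def using assms(1,3,4)
    by (intro continuous_open_preimage continuous_intros) auto
  moreover have "V \<noteq> {}" "V \<subseteq> N"
    using \<open>F t \<noteq> G t\<close> assms(5,6) by (auto simp: V_def)
  ultimately show False
    using open_not_negligible negligible_subset assms(2) by blast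
qed

lemma negligible_image_lipschitz_on:
  fixes f :: "'a::euclidean_space \<Rightarrow> 'b::euclidean_space"
  assumes "DIM('a) \<le> DIM('b)" "C-lipschitz_on S f" "negligible N"
  shows "negligible (f ` (N \<inter> S))"
proof (rule negligible_locally_Lipschitz_image[OF assms(1)])
  show "negligible (N \<inter> S)" using assms(3) negligible_Int by blast
  fix x assume "x \<in> N \<inter> S"
  then have "\<forall>y\<in>N \<inter> S \<inter> UNIV. norm (f y - f x) \<le> C * norm (y - x)"
    using lipschitz_onD[OF assms(2)] by (auto simp: dist_norm)
  then show "\<exists>T B. open T \<and> x \<in> T \<and> (\<forall>y\<in>N \<inter> S \<inter> T. norm (f y - f x) \<le> B * norm (y - x))"
    by blast
qed

lemma last_crossing:
  fixes \<psi> :: "real \<Rightarrow> real"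
  assumes cont: "continuous_on {a..b} \<psi>" and "a \<le> b" "y \<le> \<psi> a" "\<psi> b < y"
  shows "\<exists>s\<in>{a..<b}. \<psi> s = y \<and> (\<forall>t\<in>{s<..b}. \<psi> t < y)"
proof -
  define A where "A = {t \<in> {a..b}. y \<le> \<psi> t}"
  have "closed A"
    unfolding A_def using continuous_closed_preimage[OF cont closed_atLeastAtMost, of "{y..}"]
    by (simp add: vimage_def Int_def conj_commute)
  moreover have "a \<in> A" "bdd_above A" using assms by (auto simp: A_def)
  ultimately have sA: "Sup A \<in> A" using closed_contains_Sup by blast
  define s where "s = Sup A"
  have "s < b" using sA assms(4) by (cases "s = b") (auto simp: A_def s_def)
  have right: "\<psi> t < y" if "t \<in> {s<..b}" for t
    using cSup_upper[OF _ \<open>bdd_above A\<close>, of t] that sA by (force simp: A_def s_def)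
  have "\<psi> s \<le> y"
  proof (rule ccontr)
    assume "\<not> \<psi> s \<le> y"
    moreover have "(\<psi> \<longlongrightarrow> \<psi> s) (at s within {a..b})"
      using cont sA by (auto simp: A_def s_def continuous_on_def)
    ultimately have "\<forall>\<^sub>F t in at s within {a..b}. y < \<psi> t"
      by (auto intro: order_tendstoD)
    then obtain d where "d > 0" and d: "\<And>t. t \<in> {a..b} \<Longrightarrow> t \<noteq> s \<Longrightarrow> dist t s < d \<Longrightarrow> y < \<psi> t"
      by (auto simp: eventually_at)
    define t where "t = min b (s + d/2)"
    have "t \<in> {s<..b}" using \<open>s < b\<close> \<open>d > 0\<close> by (auto simp: t_def)
    moreover have "y < \<psi> t"
      using d[of t] sA \<open>s < b\<close> \<open>d > 0\<close> by (auto simp: t_def A_def s_def dist_real_def)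
    ultimately show False using right by force
  qed
  then show ?thesis
    using sA \<open>s < b\<close> right by (intro bexI[of _ s]) (auto simp: A_def s_def)
qed

text \<open>Tilting by \<open>\<epsilon> t\<close> makes the derivative positive; a level \<open>y\<close> avoiding the null image of
  the exceptional set is then crossed for the last time at a point where the derivative exists.\<close>

lemma lipschitz_on_le_if_deriv_nonneg_off_negligible:
  fixes \<phi> :: "real \<Rightarrow> real"
  assumes "a \<le> b" and lip: "C-lipschitz_on {a..b} \<phi>" and "negligible N"
    and der: "\<And>t. t \<in> {a<..<b} - N \<Longrightarrow> \<exists>d\<ge>0. (\<phi> has_real_derivative d) (at t)"
  shows "\<phi> a \<le> \<phi> b"
proof (rule ccontr)
  assume "\<not> \<phi> a \<le> \<phi> b"
  with \<open>a \<le> b\<close> have "a < b" by (cases "a = b") auto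
  define \<epsilon> where "\<epsilon> = (\<phi> a - \<phi> b) / (2 * (b - a))"
  define \<psi> where "\<psi> t = \<phi> t + \<epsilon> * t" for t
  have "\<epsilon> > 0" using \<open>\<not> \<phi> a \<le> \<phi> b\<close> \<open>a < b\<close> by (simp add: \<epsilon>_def)
  have "\<epsilon> * (b - a) = (\<phi> a - \<phi> b) / 2"
    using \<open>a < b\<close> by (simp add: \<epsilon>_def field_simps)
  then have "\<psi> b - \<psi> a = (\<phi> b - \<phi> a) / 2"
    by (simp add: \<psi>_def algebra_simps)
  then have "\<psi> b < \<psi> a" using \<open>\<not> \<phi> a \<le> \<phi> b\<close> by simp
  have "\<epsilon>-lipschitz_on {a..b} (\<lambda>t. \<epsilon> * t)"
    using \<open>\<epsilon> > 0\<close> by (intro lipschitz_onI) (auto simp: dist_real_def abs_mult right_diff_distrib[symmetric])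
  then have lip\<psi>: "(C + \<epsilon>)-lipschitz_on {a..b} \<psi>"
    unfolding \<psi>_def by (intro lipschitz_on_add lip)
  have "negligible (\<psi> ` (N \<inter> {a..b}))"
    by (rule negligible_image_lipschitz_on[OF _ lip\<psi> \<open>negligible N\<close>]) simp
  moreover have "\<not> negligible {\<psi> b<..<\<psi> a}"
    using \<open>\<psi> b < \<psi> a\<close> by (intro open_not_negligible) auto
  ultimately obtain y where y: "y \<in> {\<psi> b<..<\<psi> a}" "y \<notin> \<psi> ` (N \<inter> {a..b})"
    using negligible_subset by blast
  obtain s where s: "s \<in> {a..<b}" "\<psi> s = y" "\<And>t. t \<in> {s<..b} \<Longrightarrow> \<psi> t < y"
    using last_crossing[OF lipschitz_on_continuous_on[OF lip\<psi>] \<open>a \<le> b\<close>, of y] y by auto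
  have "s \<in> {a<..<b} - N"
    using s y by (cases "s = a") auto
  then obtain d where "d \<ge> 0" "(\<phi> has_real_derivative d) (at s)" using der by blast
  then have "(\<psi> has_real_derivative d + \<epsilon>) (at s)"
    unfolding \<psi>_def by (auto intro!: derivative_eq_intros)
  then obtain e where "e > 0" and e: "\<And>h. h > 0 \<Longrightarrow> h < e \<Longrightarrow> \<psi> s < \<psi> (s + h)"
    using DERIV_pos_inc_right[of \<psi> "d + \<epsilon>" s] \<open>d \<ge> 0\<close> \<open>\<epsilon> > 0\<close> by auto
  define h where "h = min (e/2) (b - s)"
  have "h > 0" "h < e" "s + h \<in> {s<..b}" using \<open>e > 0\<close> s(1) by (auto simp: h_def)
  then show False
    using e[of h] s(2) s(3)[of "s + h"] by linarith
qed

lemma connected_nonvanishing_sign: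
  fixes h :: "'a::topological_space \<Rightarrow> real"
  assumes "connected S" "continuous_on S h" "\<And>t. t \<in> S \<Longrightarrow> h t \<noteq> 0"
  shows "(\<forall>t\<in>S. h t > 0) \<or> (\<forall>t\<in>S. h t < 0)"
proof (rule ccontr)
  assume "\<not> ?thesis"
  then obtain x y where "x \<in> S" "y \<in> S" "h x < 0" "h y > 0"
    using assms(3) by (force simp: not_less less_le)
  moreover have "connected (h ` S)"
    by (rule connected_continuous_image[OF assms(2,1)])
  ultimately have "0 \<in> h ` S"
    using connected_contains_Icc[of "h ` S" "h x" "h y"] by force
  then show False using assms(3) by auto
qed

section \<open>Consecutive points of a set of reals\<close>

lemma closed_set_gap:
  fixes C :: "real set"
  assumes "closed C" "y \<in> C" "w \<in> C" "y \<le> t" "t \<le> w" "t \<notin> C"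
  obtains c d where "c \<in> C" "d \<in> C" "y \<le> c" "c < t" "t < d" "d \<le> w" "C \<inter> {c<..<d} = {}"
proof -
  define L where "L = C \<inter> {y..t}"
  define R where "R = C \<inter> {t..w}"
  have "closed L" "closed R" "y \<in> L" "w \<in> R" "bdd_above L" "bdd_below R"
    using assms by (auto simp: L_def R_def)
  then have "Sup L \<in> L" "Inf R \<in> R"
    using closed_contains_Sup closed_contains_Inf by blast+
  moreover have "x \<le> Sup L" if "x \<in> L" for x using cSup_upper[OF that \<open>bdd_above L\<close>] .
  moreover have "Inf R \<le> x" if "x \<in> R" for x using cInf_lower[OF that \<open>bdd_below R\<close>] .
  ultimately have "C \<inter> {Sup L<..<Inf R} = {}"
    by (fastforce simp: L_def R_def)
  moreover have "Sup L < t" "t < Inf R"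
    using \<open>Sup L \<in> L\<close> \<open>Inf R \<in> R\<close> assms(6) by (auto simp: L_def R_def less_le)
  ultimately show ?thesis
    using that \<open>Sup L \<in> L\<close> \<open>Inf R \<in> R\<close> by (auto simp: L_def R_def)
qed

lemma immediate_successor:
  fixes S :: "real set"
  assumes "y \<in> S" "w \<in> S" "y < w"
    and iso: "\<exists>r>0. \<forall>x\<in>S. \<bar>x - y\<bar> < r \<longrightarrow> x = y"
    and clo: "closed (S \<inter> {y..w})"
  shows "\<exists>q\<in>S. y < q \<and> q \<le> w \<and> S \<inter> {y<..<q} = {}"
proof -
  obtain r where "r > 0" and r: "\<And>x. x \<in> S \<Longrightarrow> \<bar>x - y\<bar> < r \<Longrightarrow> x = y"
    using iso by blast
  have far: "y + r \<le> x" if "x \<in> S" "y < x" for x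
    using r[OF that(1)] that(2) by force
  define Q where "Q = S \<inter> {y..w} \<inter> {y + r..}"
  have "closed Q" unfolding Q_def by (rule closed_Int[OF clo]) simp
  moreover have "w \<in> Q" using assms(2,3) far by (auto simp: Q_def)
  moreover have "bdd_below Q" by (auto simp: Q_def bdd_below_def)
  ultimately have "Inf Q \<in> Q" using closed_contains_Inf by blast
  then have q: "Inf Q \<in> S" "y < Inf Q" "Inf Q \<le> w"
    using \<open>r > 0\<close> by (auto simp: Q_def)
  have "Inf Q \<le> x" if "x \<in> S" "y < x" "x < Inf Q" for x
    using cInf_lower[OF _ \<open>bdd_below Q\<close>, of x] that q(3) far by (auto simp: Q_def)
  then have "S \<inter> {y<..<Inf Q} = {}" by force
  then show ?thesis using q by blast
qed

lemma increasing_chain_of_successors: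
  fixes S :: "real set"
  assumes "bdd_above S"
    and iso: "\<And>z. z \<in> S \<Longrightarrow> \<exists>r>0. \<forall>x\<in>S. \<bar>x - z\<bar> < r \<longrightarrow> x = z"
    and clo: "\<And>y w. y \<in> S \<Longrightarrow> w \<in> S \<Longrightarrow> closed (S \<inter> {y..w})"
    and "z0 \<in> S" "infinite (S \<inter> {z0<..})"
  shows "\<exists>zs. (\<forall>n. zs n \<in> S \<and> zs n < zs (Suc n) \<and> S \<inter> {zs n<..<zs (Suc n)} = {}) \<and> convergent zs"
proof -
  define P where "P y \<longleftrightarrow> y \<in> S \<and> infinite (S \<inter> {y<..})" for y
  have "\<exists>q. P q \<and> y < q \<and> S \<inter> {y<..<q} = {}" if "P y" for y
  proof -
    obtain w where "w \<in> S \<inter> {y<..}"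
      using \<open>P y\<close> by (metis P_def ex_in_conv finite.emptyI)
    then obtain q where q: "q \<in> S" "y < q" "S \<inter> {y<..<q} = {}"
      using immediate_successor[of y S w] iso clo \<open>P y\<close> by (auto simp: P_def)
    then have "S \<inter> {y<..} \<subseteq> insert q (S \<inter> {q<..})" by auto
    then have "infinite (S \<inter> {q<..})"
      using \<open>P y\<close> finite_subset by (auto simp: P_def)
    then show ?thesis using q by (auto simp: P_def)
  qed
  then obtain nxt where nxt: "\<And>y. P y \<Longrightarrow> P (nxt y) \<and> y < nxt y \<and> S \<inter> {y<..<nxt y} = {}"
    by metis
  define zs where "zs n = (nxt ^^ n) z0" for n
  have P: "P (zs n)" for n
    by (induction n) (use assms(4,5) nxt in \<open>auto simp: zs_def P_def\<close>)
  then have chain: "zs n \<in> S \<and> zs n < zs (Suc n) \<and> S \<inter> {zs n<..<zs (Suc n)} = {}" for n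
    using nxt[OF P] by (simp add: zs_def P_def)
  then have "incseq zs" by (intro incseq_SucI less_imp_le) blast
  moreover have "bdd_above (range zs)"
    using \<open>bdd_above S\<close> chain by (auto intro: bdd_above_mono)
  ultimately have "convergent zs"
    using LIMSEQ_incseq_SUP convergentI by blast
  then show ?thesis using chain by blast
qed

lemma decreasing_chain_of_successors:
  fixes S :: "real set"
  assumes "bdd_below S"
    and iso: "\<And>z. z \<in> S \<Longrightarrow> \<exists>r>0. \<forall>x\<in>S. \<bar>x - z\<bar> < r \<longrightarrow> x = z"
    and clo: "\<And>y w. y \<in> S \<Longrightarrow> w \<in> S \<Longrightarrow> closed (S \<inter> {y..w})"
    and "z0 \<in> S" "infinite (S \<inter> {..<z0})"
  shows "\<exists>zs. (\<forall>n. zs n \<in> S \<and> zs (Suc n) < zs n \<and> S \<inter> {zs (Suc n)<..<zs n} = {}) \<and> convergent zs"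
proof -
  define R where "R = {x. - x \<in> S}"
  have "\<exists>zs. (\<forall>n. zs n \<in> R \<and> zs n < zs (Suc n) \<and> R \<inter> {zs n<..<zs (Suc n)} = {}) \<and> convergent zs"
  proof (rule increasing_chain_of_successors)
    obtain m where "\<And>x. x \<in> S \<Longrightarrow> m \<le> x" using assms(1) by (auto simp: bdd_below_def)
    then show "bdd_above R" by (force simp: R_def bdd_above_def intro!: exI[of _ "- m"])
    show "\<exists>r>0. \<forall>x\<in>R. \<bar>x - z\<bar> < r \<longrightarrow> x = z" if z: "z \<in> R" for z
    proof -
      obtain r where "r > 0" and r: "\<And>x. x \<in> S \<Longrightarrow> \<bar>x - - z\<bar> < r \<Longrightarrow> x = - z"
        using iso[of "- z"] z by (auto simp: R_def)
      have "x = z" if "x \<in> R" "\<bar>x - z\<bar> < r" for x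
        using r[of "- x"] that by (simp add: R_def abs_minus_commute)
      then show ?thesis using \<open>r > 0\<close> by blast
    qed
    show "closed (R \<inter> {y..w})" if "y \<in> R" "w \<in> R" for y w
    proof -
      have "R \<inter> {y..w} = uminus -` (S \<inter> {-w..-y})" by (auto simp: R_def simp del: vimage_Int)
      moreover have "closed (uminus -` (S \<inter> {-w..-y}))"
        using clo[of "-w" "-y"] that by (intro continuous_closed_vimage) (auto simp: R_def)
      ultimately show ?thesis by simp
    qed
    show "- z0 \<in> R" using assms(4) by (simp add: R_def)
    have "R \<inter> {-z0<..} = uminus -` (S \<inter> {..<z0})" by (auto simp: R_def)
    then show "infinite (R \<inter> {-z0<..})"
      using assms(5) finite_vimageD[of uminus "S \<inter> {..<z0}"] by (auto simp: surj_def)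
  qed
  then obtain zs where zs: "\<And>n. zs n \<in> R \<and> zs n < zs (Suc n) \<and> R \<inter> {zs n<..<zs (Suc n)} = {}"
    "convergent zs" by blast
  have "- zs n \<in> S \<and> - zs (Suc n) < - zs n \<and> S \<inter> {- zs (Suc n)<..<- zs n} = {}" for n
  proof -
    have "t \<notin> S" if "- zs (Suc n) < t" "t < - zs n" for t
    proof
      assume "t \<in> S"
      then have "- t \<in> R \<inter> {zs n<..<zs (Suc n)}" using that by (simp add: R_def)
      then show False using zs(1)[of n] by blast
    qed
    then have "S \<inter> {- zs (Suc n)<..<- zs n} = {}" by auto
    moreover have "- zs n \<in> S" "- zs (Suc n) < - zs n" using zs(1)[of n] by (auto simp: R_def)
    ultimately show ?thesis by simp
  qed
  moreover have "convergent (\<lambda>n. - zs n)" using zs(2) convergent_minus_iff by blast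
  ultimately show ?thesis by (intro exI[of _ "\<lambda>n. - zs n"]) simp
qed

lemma monotone_chain_of_consecutive_points:
  fixes S :: "real set"
  assumes "bounded S" "infinite S"
    and iso: "\<And>z. z \<in> S \<Longrightarrow> \<exists>r>0. \<forall>x\<in>S. \<bar>x - z\<bar> < r \<longrightarrow> x = z"
    and clo: "\<And>y w. y \<in> S \<Longrightarrow> w \<in> S \<Longrightarrow> closed (S \<inter> {y..w})"
  obtains zs where "(\<forall>n. zs n < zs (Suc n)) \<or> (\<forall>n. zs (Suc n) < zs n)"
    and "\<And>n. zs n \<in> S" "\<And>n. S \<inter> {min (zs n) (zs (Suc n))<..<max (zs n) (zs (Suc n))} = {}"
    and "convergent zs"
proof (cases "\<exists>z0\<in>S. infinite (S \<inter> {z0<..})")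
  case True
  then obtain z0 where "z0 \<in> S" "infinite (S \<inter> {z0<..})" by blast
  then obtain zs
    where zs: "\<And>n. zs n \<in> S \<and> zs n < zs (Suc n) \<and> S \<inter> {zs n<..<zs (Suc n)} = {}" "convergent zs"
    using increasing_chain_of_successors[OF bounded_imp_bdd_above[OF assms(1)] iso clo] by blast
  have "min (zs n) (zs (Suc n)) = zs n" "max (zs n) (zs (Suc n)) = zs (Suc n)" for n
    using zs(1)[of n] by auto
  then show ?thesis using zs by (intro that) auto
next
  case False
  obtain z0 where "z0 \<in> S" using assms(2) by (metis ex_in_conv finite.emptyI)
  have "S \<subseteq> insert z0 ((S \<inter> {z0<..}) \<union> (S \<inter> {..<z0}))" by auto
  moreover have "finite (S \<inter> {z0<..})" using False \<open>z0 \<in> S\<close> by blast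
  ultimately have "infinite (S \<inter> {..<z0})"
    using assms(2) by (meson finite_Un finite_insert finite_subset)
  then obtain zs
    where zs: "\<And>n. zs n \<in> S \<and> zs (Suc n) < zs n \<and> S \<inter> {zs (Suc n)<..<zs n} = {}" "convergent zs"
    using decreasing_chain_of_successors[OF bounded_imp_bdd_below[OF assms(1)] iso clo \<open>z0 \<in> S\<close>]
    by blast
  have "min (zs n) (zs (Suc n)) = zs (Suc n)" "max (zs n) (zs (Suc n)) = zs n" for n
    using zs(1)[of n] by auto
  then show ?thesis using zs by (intro that) auto
qed

section \<open>Bounded variation\<close>

lemma bounded_variation_on_bdd:
  assumes "bounded_variation_on S \<beta>" "A \<subseteq> S"
  shows "bdd_above (\<beta> ` A)" "bdd_below (\<beta> ` A)"
proof -
  obtain B where var: "\<forall>xs. sorted xs \<and> set xs \<subseteq> S \<longrightarrow>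
      (\<Sum>i<length xs - 1. \<bar>\<beta> (xs ! Suc i) - \<beta> (xs ! i)\<bar>) \<le> B"
    using assms(1) unfolding bounded_variation_on_def by blast
  have le: "\<bar>\<beta> t - \<beta> s\<bar> \<le> B" if "s \<in> A" "t \<in> A" "s \<le> t" for s t
    using var[rule_format, of "[s, t]"] that assms(2) by auto
  have "\<bar>\<beta> t - \<beta> s\<bar> \<le> B" if "s \<in> A" "t \<in> A" for s t
    using le[OF that] le[OF that(2,1)] by (cases "s \<le> t") (auto simp: abs_minus_commute)
  then have "\<exists>c. \<forall>t\<in>A. \<bar>\<beta> t - c\<bar> \<le> B"
    by (cases "A = {}") (auto simp: ex_in_conv[symmetric])
  then obtain c where c: "\<forall>t\<in>A. \<bar>\<beta> t - c\<bar> \<le> B" by blast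
  show "bdd_above (\<beta> ` A)"
    by (rule bdd_aboveI2[where M = "c + B"]) (use c in \<open>auto simp: abs_le_iff\<close>)
  show "bdd_below (\<beta> ` A)"
    by (rule bdd_belowI2[where m = "c - B"]) (use c in \<open>auto simp: abs_le_iff\<close>)
qed

lemma oscillation_le_diff:
  fixes \<beta> :: "'a \<Rightarrow> real"
  assumes "A \<noteq> {}" "bdd_above (\<beta> ` A)" "bdd_below (\<beta> ` A)" "\<delta> > 0"
  shows "\<exists>p\<in>A. \<exists>q\<in>A. Sup (\<beta> ` A) - Inf (\<beta> ` A) \<le> \<bar>\<beta> p - \<beta> q\<bar> + 2 * \<delta>"
proof -
  obtain p where "p \<in> A" "Sup (\<beta> ` A) - \<delta> < \<beta> p"
    using less_cSupE[of "Sup (\<beta> ` A) - \<delta>" "\<beta> ` A"] assms(1,4) by auto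
  moreover obtain q where "q \<in> A" "\<beta> q < Inf (\<beta> ` A) + \<delta>"
    using cInf_lessD[of "\<beta> ` A" "Inf (\<beta> ` A) + \<delta>"] assms(1,4) by auto
  ultimately show ?thesis by force
qed

lemma variation_bound_chain:
  fixes \<beta> :: "real \<Rightarrow> real" and c :: "nat \<Rightarrow> real"
  assumes var: "\<forall>xs. sorted xs \<and> set xs \<subseteq> S \<longrightarrow>
        (\<Sum>i<length xs - 1. \<bar>\<beta> (xs ! Suc i) - \<beta> (xs ! i)\<bar>) \<le> B"
    and mono: "\<And>i. i < M \<Longrightarrow> c i \<le> c (Suc i)" and inS: "\<And>i. i \<le> M \<Longrightarrow> c i \<in> S"
  shows "(\<Sum>i<M. \<bar>\<beta> (c (Suc i)) - \<beta> (c i)\<bar>) \<le> B"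
proof -
  define xs where "xs = map c [0..<Suc M]"
  have "sorted xs"
    unfolding xs_def sorted_iff_nth_Suc using mono by (simp del: upt_Suc)
  moreover have "set xs \<subseteq> S" using inS by (auto simp: xs_def)
  ultimately have "(\<Sum>i<length xs - 1. \<bar>\<beta> (xs ! Suc i) - \<beta> (xs ! i)\<bar>) \<le> B" using var by blast
  moreover have "(\<Sum>i<length xs - 1. \<bar>\<beta> (xs ! Suc i) - \<beta> (xs ! i)\<bar>) =
      (\<Sum>i<M. \<bar>\<beta> (c (Suc i)) - \<beta> (c i)\<bar>)"
    unfolding xs_def by (intro sum.cong) (auto simp del: upt_Suc)
  ultimately show ?thesis by simp
qed

lemma variation_bound_pairs:
  fixes \<beta> :: "real \<Rightarrow> real" and lo hi :: "nat \<Rightarrow> real"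
  assumes var: "\<forall>xs. sorted xs \<and> set xs \<subseteq> S \<longrightarrow>
        (\<Sum>i<length xs - 1. \<bar>\<beta> (xs ! Suc i) - \<beta> (xs ! i)\<bar>) \<le> B"
    and lh: "\<And>n. n < K \<Longrightarrow> lo n \<le> hi n"
    and hl: "\<And>n. Suc n < K \<Longrightarrow> hi n \<le> lo (Suc n)"
    and inS: "\<And>n. n < K \<Longrightarrow> lo n \<in> S \<and> hi n \<in> S"
  shows "(\<Sum>n<K. \<bar>\<beta> (hi n) - \<beta> (lo n)\<bar>) \<le> B"
proof (cases "K = 0")
  case True
  then show ?thesis using var[rule_format, of "[]"] by simp
next
  case False
  define c where "c i = (if even i then lo (i div 2) else hi (i div 2))" for i
  define F where "F i = \<bar>\<beta> (c (Suc i)) - \<beta> (c i)\<bar>" for i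
  have "(\<Sum>n<K. \<bar>\<beta> (hi n) - \<beta> (lo n)\<bar>) = sum F ((*) 2 ` {..<K})"
    by (subst sum.reindex) (auto simp: F_def c_def inj_on_def)
  also have "\<dots> \<le> sum F {..<2 * K - 1}"
    by (intro sum_mono2) (auto simp: F_def)
  also have "\<dots> \<le> B"
    unfolding F_def
  proof (rule variation_bound_chain[OF var])
    fix i assume "i < 2 * K - 1"
    then show "c i \<le> c (Suc i)"
      using lh[of "i div 2"] hl[of "i div 2"] by (auto simp: c_def elim!: evenE oddE)
  next
    fix i assume "i \<le> 2 * K - 1"
    then show "c i \<in> S"
      using inS[of "i div 2"] False by (auto simp: c_def)
  qed
  finally show ?thesis .
qed

lemma variation_bound_monotone_pairs:
  fixes \<beta> :: "real \<Rightarrow> real" and P Q :: "nat \<Rightarrow> real"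
  assumes var: "\<forall>xs. sorted xs \<and> set xs \<subseteq> S \<longrightarrow>
        (\<Sum>i<length xs - 1. \<bar>\<beta> (xs ! Suc i) - \<beta> (xs ! i)\<bar>) \<le> B"
    and PQ: "\<And>n. P n \<le> Q n" "\<And>n. P n \<in> S" "\<And>n. Q n \<in> S"
    and order: "(\<forall>n. Q n \<le> P (Suc n)) \<or> (\<forall>n. Q (Suc n) \<le> P n)"
  shows "(\<Sum>n<K. \<bar>\<beta> (Q n) - \<beta> (P n)\<bar>) \<le> B"
  using order
proof
  assume "\<forall>n. Q n \<le> P (Suc n)"
  then show ?thesis by (intro variation_bound_pairs[OF var]) (use PQ in auto)
next
  assume dec: "\<forall>n. Q (Suc n) \<le> P n"
  have "(\<Sum>j<K. \<bar>\<beta> (Q (K - Suc j)) - \<beta> (P (K - Suc j))\<bar>) \<le> B"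
  proof (rule variation_bound_pairs[OF var])
    fix j assume "Suc j < K"
    then have "K - Suc j = Suc (K - Suc (Suc j))" by simp
    then show "Q (K - Suc j) \<le> P (K - Suc (Suc j))" using dec by metis
  qed (use PQ in auto)
  also have "(\<Sum>j<K. \<bar>\<beta> (Q (K - Suc j)) - \<beta> (P (K - Suc j))\<bar>) = (\<Sum>n<K. \<bar>\<beta> (Q n) - \<beta> (P n)\<bar>)"
    by (rule sum.reindex_bij_witness[where i = "\<lambda>n. K - Suc n" and j = "\<lambda>n. K - Suc n"]) auto
  finally show ?thesis .
qed

lemma bounded_variation_summable_oscillation:
  fixes \<beta> :: "real \<Rightarrow> real" and lo hi :: "nat \<Rightarrow> real"
  assumes bv: "bounded_variation_on S \<beta>"
    and lh: "\<And>n. lo n \<le> hi n" and sub: "\<And>n. {lo n..hi n} \<subseteq> S"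
    and order: "(\<forall>n. hi n \<le> lo (Suc n)) \<or> (\<forall>n. hi (Suc n) \<le> lo n)"
  shows "summable (\<lambda>n. Sup (\<beta> ` {lo n..hi n}) - Inf (\<beta> ` {lo n..hi n}))"
proof -
  obtain B where var: "\<forall>xs. sorted xs \<and> set xs \<subseteq> S \<longrightarrow>
      (\<Sum>i<length xs - 1. \<bar>\<beta> (xs ! Suc i) - \<beta> (xs ! i)\<bar>) \<le> B"
    using bv unfolding bounded_variation_on_def by blast
  define J where "J n = \<beta> ` {lo n..hi n}" for n
  have J: "{lo n..hi n} \<noteq> {}" "bdd_above (J n)" "bdd_below (J n)" for n
    using lh[of n] bounded_variation_on_bdd[OF bv sub[of n]] by (auto simp: J_def)
  then have "\<exists>p\<in>{lo n..hi n}. \<exists>q\<in>{lo n..hi n}.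
      Sup (J n) - Inf (J n) \<le> \<bar>\<beta> p - \<beta> q\<bar> + 2 * (1/2)^n" for n
    unfolding J_def by (intro oscillation_le_diff) auto
  then obtain p q where pq: "\<And>n. p n \<in> {lo n..hi n}" "\<And>n. q n \<in> {lo n..hi n}"
    and osc: "\<And>n. Sup (J n) - Inf (J n) \<le> \<bar>\<beta> (p n) - \<beta> (q n)\<bar> + 2 * (1/2)^n"
    by metis
  define P where "P n = min (p n) (q n)" for n
  define Q where "Q n = max (p n) (q n)" for n
  have PQ: "lo n \<le> P n" "P n \<le> Q n" "Q n \<le> hi n" "P n \<in> S" "Q n \<in> S" for n
    using pq[of n] sub[of n] by (auto simp: P_def Q_def)
  have dPQ: "\<bar>\<beta> (p n) - \<beta> (q n)\<bar> = \<bar>\<beta> (Q n) - \<beta> (P n)\<bar>" for n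
    by (auto simp: P_def Q_def min_def max_def)
  have "(\<forall>n. Q n \<le> P (Suc n)) \<or> (\<forall>n. Q (Suc n) \<le> P n)"
    using order PQ order_trans by meson
  then have bound: "(\<Sum>n<K. \<bar>\<beta> (Q n) - \<beta> (P n)\<bar>) \<le> B" for K
    using variation_bound_monotone_pairs[OF var] PQ by blast
  have geometric: "(\<Sum>n<K. 2 * (1/2::real)^n) \<le> 4" for K
  proof -
    have "(\<Sum>n<K. (1/2::real)^n) \<le> 2" by (simp add: sum_gp_strict)
    then show ?thesis by (simp add: sum_distrib_left[symmetric])
  qed
  show ?thesis
  proof (rule summableI_nonneg_bounded)
    show "0 \<le> Sup (\<beta> ` {lo n..hi n}) - Inf (\<beta> ` {lo n..hi n})" for n
      using cInf_le_cSup[of "J n"] J[of n] by (simp add: J_def)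
    fix K
    have "(\<Sum>n<K. Sup (J n) - Inf (J n)) \<le> (\<Sum>n<K. \<bar>\<beta> (Q n) - \<beta> (P n)\<bar>) + (\<Sum>n<K. 2 * (1/2::real)^n)"
      unfolding sum.distrib[symmetric] by (intro sum_mono) (use osc dPQ in simp)
    also have "\<dots> \<le> B + 4" using bound geometric by (intro add_mono)
    finally show "(\<Sum>n<K. Sup (\<beta> ` {lo n..hi n}) - Inf (\<beta> ` {lo n..hi n})) \<le> B + 4"
      by (simp add: J_def)
  qed
qed

text \<open>On a tail where \<open>\<Sum> (M n - m n) / m0 \<le> 1/2\<close>, the products of the ratios \<open>m n / M n\<close> stay
  above \<open>1/2\<close>.\<close>

lemma summable_ratio_defect_not_tendsto_zero:
  fixes x m M :: "nat \<Rightarrow> real"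
  assumes step: "\<And>n. n \<ge> n0 \<Longrightarrow> m n * x n \<le> M n * x (Suc n)"
    and m0: "m0 > 0" and m0_le: "\<And>n. m0 \<le> m n" and le_M: "\<And>n. m n \<le> M n"
    and summable: "summable (\<lambda>n. M n - m n)"
    and pos: "\<And>n. x n > 0"
  shows "\<not> x \<longlonglongrightarrow> 0"
proof
  assume "x \<longlonglongrightarrow> 0"
  define d where "d n = (M n - m n) / m0" for n
  have d0: "d n \<ge> 0" for n using m0 le_M by (simp add: d_def)
  have "summable d" unfolding d_def[abs_def] using summable by (rule summable_divide)
  then obtain N where N: "\<forall>n\<ge>N. norm (\<Sum>i. d (i + n)) < 1/2"
    using suminf_exist_split[of "1/2" d] by auto
  define N1 where "N1 = max N n0"
  have "summable (\<lambda>i. d (i + N1))"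
    using \<open>summable d\<close> summable_ignore_initial_segment by blast
  then have tail: "(\<Sum>i<j. d (N1 + i)) \<le> 1/2" for j
    using sum_le_suminf[of "\<lambda>i. d (i + N1)" "{..<j}"] d0 N[rule_format, of N1]
    by (simp add: N1_def add.commute)
  have ratio: "x (Suc n) \<ge> (1 - d n) * x n" if "n \<ge> n0" for n
  proof -
    have "M n > 0" using m0 m0_le[of n] le_M[of n] by linarith
    have "(1 - d n) * M n \<le> m n"
      using m0 m0_le[of n] le_M[of n] mult_left_mono[of m0 "M n" "M n - m n"]
      by (simp add: d_def field_simps)
    then have "(1 - d n) * M n * x n \<le> M n * x (Suc n)"
      using step[OF that] pos[of n] by (smt (verit) mult_right_mono)
    then show ?thesis using \<open>M n > 0\<close> by (simp add: mult.commute mult.left_commute)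
  qed
  have lower: "x (N1 + j) \<ge> (1 - (\<Sum>i<j. d (N1 + i))) * x N1" for j
  proof (induction j)
    case (Suc j)
    define S where "S = (\<Sum>i<j. d (N1 + i))"
    have "S + d (N1 + j) \<le> 1/2" "S \<ge> 0"
      using tail[of "Suc j"] d0 by (simp_all add: S_def sum_nonneg)
    then have "1 - d (N1 + j) \<ge> 0" "1 - S \<ge> 0"
      using d0[of "N1 + j"] by linarith+
    have "(1 - S - d (N1 + j)) * x N1 \<le> (1 - d (N1 + j)) * ((1 - S) * x N1)"
      using pos[of N1] d0[of "N1 + j"] \<open>S \<ge> 0\<close> by (simp add: algebra_simps)
    also have "\<dots> \<le> (1 - d (N1 + j)) * x (N1 + j)"
      using Suc.IH \<open>1 - d (N1 + j) \<ge> 0\<close> by (simp add: S_def mult_left_mono)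
    also have "\<dots> \<le> x (N1 + Suc j)"
      using ratio[of "N1 + j"] by (simp add: N1_def)
    finally show ?case by (simp add: S_def algebra_simps)
  qed simp
  have "x (N1 + j) \<ge> x N1 / 2" for j
  proof -
    have "(1/2) * x N1 \<le> (1 - (\<Sum>i<j. d (N1 + i))) * x N1"
      using tail[of j] pos[of N1] by (intro mult_right_mono) auto
    then show ?thesis using lower[of j] by linarith
  qed
  moreover obtain n1 where "\<forall>n\<ge>n1. norm (x n) < x N1 / 2"
    using LIMSEQ_D[OF \<open>x \<longlonglongrightarrow> 0\<close>, of "x N1 / 2"] pos[of N1] by auto
  then have "x (N1 + n1) < x N1 / 2" using pos[of "N1 + n1"] by (metis abs_of_pos le_add2 real_norm_def)
  ultimately show False by (meson not_le)
qed

lemma unit_curve_derivative_orthogonal: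
  fixes \<gamma> :: "real \<Rightarrow> 'a::real_inner"
  assumes der: "(\<gamma> has_vector_derivative D) (at t)"
    and "open S" "t \<in> S" and unit: "\<And>s. s \<in> S \<Longrightarrow> norm (\<gamma> s) = 1"
  shows "\<gamma> t \<bullet> D = 0"
proof -
  have d: "(\<gamma> has_derivative (\<lambda>h. h *\<^sub>R D)) (at t)"
    using der by (simp add: has_vector_derivative_def)
  have "((\<lambda>s. \<gamma> s \<bullet> \<gamma> s) has_derivative (\<lambda>h. \<gamma> t \<bullet> (h *\<^sub>R D) + (h *\<^sub>R D) \<bullet> \<gamma> t)) (at t)"
    by (rule has_derivative_inner[OF d d])
  moreover have "((\<lambda>s. \<gamma> s \<bullet> \<gamma> s) has_derivative (\<lambda>h. 0)) (at t)"
  proof (rule has_derivative_transform_within_open[of "\<lambda>s. 1"])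
    show "1 = \<gamma> s \<bullet> \<gamma> s" if "s \<in> S" for s
      using unit[OF that] by (simp add: dot_square_norm)
  qed (use assms(2,3) in auto)
  ultimately have "(\<lambda>h. \<gamma> t \<bullet> (h *\<^sub>R D) + (h *\<^sub>R D) \<bullet> \<gamma> t) = (\<lambda>h. 0)"
    using has_derivative_unique by blast
  then have "\<gamma> t \<bullet> D + D \<bullet> \<gamma> t = 0" by (metis scaleR_one)
  then show ?thesis by (simp add: inner_commute)
qed

lemma has_real_derivative_norm:
  fixes u :: "real \<Rightarrow> 'a::real_inner"
  assumes "(u has_vector_derivative U) (at t)" "u t \<noteq> 0"
  shows "((\<lambda>s. norm (u s)) has_real_derivative U \<bullet> sgn (u t)) (at t)"
proof -
  have d: "(u has_derivative (\<lambda>h. h *\<^sub>R U)) (at t)"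
    using assms(1) by (simp add: has_vector_derivative_def)
  have "((\<lambda>s. norm (u s)) has_derivative (\<lambda>h. (h *\<^sub>R U) \<bullet> sgn (u t))) (at t)"
    using has_derivative_compose[OF d has_derivative_norm[OF assms(2)]] by simp
  then show ?thesis by (simp add: has_field_derivative_def mult_commute_abs)
qed

lemma frame_expansion_of_dependent:
  fixes \<tau> T v :: "'a::real_inner"
  assumes \<tau>: "norm \<tau> = 1" and orth: "\<tau> \<bullet> T = 0" and T: "norm T = k" and "k > 0"
    and nontrivial: "(a, b, c) \<noteq> (0, 0, 0)" and dep: "a *\<^sub>R \<tau> + b *\<^sub>R T + c *\<^sub>R v = 0"
  shows "v = (v \<bullet> \<tau>) *\<^sub>R \<tau> + ((v \<bullet> T) / k\<^sup>2) *\<^sub>R T"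
proof -
  have \<tau>\<tau>: "\<tau> \<bullet> \<tau> = 1" and TT: "T \<bullet> T = k\<^sup>2" and T\<tau>: "T \<bullet> \<tau> = 0"
    using \<tau> T orth by (simp_all add: dot_square_norm inner_commute)
  have "c \<noteq> 0"
  proof
    assume "c = 0"
    then have "a = 0" using arg_cong[OF dep, of "(\<bullet>) \<tau>"] \<tau>\<tau> orth by (simp add: inner_add_right)
    moreover have "b * k\<^sup>2 = 0"
      using arg_cong[OF dep, of "(\<bullet>) T"] \<open>c = 0\<close> \<open>a = 0\<close> TT by (simp add: inner_add_right)
    ultimately show False using \<open>c = 0\<close> \<open>k > 0\<close> nontrivial by simp
  qed
  have "c *\<^sub>R v = - a *\<^sub>R \<tau> - b *\<^sub>R T"
    using dep by (simp add: algebra_simps eq_neg_iff_add_eq_0)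
  then have "v = (1 / c) *\<^sub>R (- a *\<^sub>R \<tau> - b *\<^sub>R T)"
    using \<open>c \<noteq> 0\<close> by (metis scaleR_scaleR divide_self_if scaleR_one mult.commute times_divide_eq_left)
  then have v: "v = (- a / c) *\<^sub>R \<tau> + (- b / c) *\<^sub>R T"
    by (simp add: algebra_simps divide_inverse)
  have "v \<bullet> \<tau> = (- a / c) * (\<tau> \<bullet> \<tau>) + (- b / c) * (T \<bullet> \<tau>)"
    "v \<bullet> T = (- a / c) * (\<tau> \<bullet> T) + (- b / c) * (T \<bullet> T)"
    by (subst v; simp only: inner_add_left inner_scaleR_left)+
  then have "v \<bullet> \<tau> = - a / c" "v \<bullet> T = (- b / c) * k\<^sup>2"
    using \<tau>\<tau> TT T\<tau> orth by simp_all
  then show ?thesis using \<open>k > 0\<close> by (subst v) simp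
qed

section \<open>An arc between consecutive zeros\<close>

text \<open>An arc \<open>(a, b)\<close> of \<open>\<Omega>\<close> between two points of \<open>I - \<Omega>\<close>, in terms of \<open>f = k\<bar>u\<bar>\<close>,
  \<open>g = \<lambda> \<bullet> \<tau>\<close> and \<open>h = \<lambda> \<bullet> \<tau>'\<close>.\<close>

locale zero_gap =
  fixes f g h \<beta> :: "real \<Rightarrow> real" and a b :: real and N :: "real set"
  assumes ab: "a < b"
    and lip_f: "\<exists>C. C-lipschitz_on {a..b} f" and lip_g: "\<exists>C. C-lipschitz_on {a..b} g"
    and negligible_N: "negligible N"
    and deriv_g: "\<And>t. t \<in> {a<..<b} - N \<Longrightarrow> (g has_real_derivative h t) (at t)"
    and deriv_f: "\<And>t. t \<in> {a<..<b} - N \<Longrightarrow> (f has_real_derivative \<beta> t * h t) (at t)"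
    and continuous_h: "continuous_on {a<..<b} h"
    and h_nonzero: "\<And>t. t \<in> {a<..<b} \<Longrightarrow> \<bar>g t\<bar> < 1 \<Longrightarrow> h t \<noteq> 0"
    and \<beta>_pos: "\<And>t. t \<in> {a<..<b} \<Longrightarrow> \<beta> t > 0"
    and f_a: "f a = 0" and f_b: "f b = 0" and f_pos: "\<And>t. t \<in> {a<..<b} \<Longrightarrow> f t > 0"
    and g_a: "\<bar>g a\<bar> < 1" and g_b: "\<bar>g b\<bar> < 1" and g_le: "\<And>t. t \<in> {a..b} \<Longrightarrow> \<bar>g t\<bar> \<le> 1"
begin

lemma combination_mono:
  assumes "a \<le> c" "c \<le> d" "d \<le> b"
    and nonneg: "\<And>t. t \<in> {c<..<d} - N \<Longrightarrow> p * (\<beta> t * h t) + q * h t \<ge> 0"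
  shows "p * f c + q * g c \<le> p * f d + q * g d"
proof -
  obtain Cf Cg where Cf: "Cf-lipschitz_on {a..b} f" and Cg: "Cg-lipschitz_on {a..b} g"
    using lip_f lip_g by blast
  have lip: "(\<bar>p\<bar> * Cf + \<bar>q\<bar> * Cg)-lipschitz_on {c..d} (\<lambda>t. p * f t + q * g t)"
    by (intro lipschitz_on_add lipschitz_on_cmult_real lipschitz_on_subset[OF Cf]
        lipschitz_on_subset[OF Cg]) (use assms in auto)
  show ?thesis
  proof (rule lipschitz_on_le_if_deriv_nonneg_off_negligible[OF \<open>c \<le> d\<close> lip negligible_N])
    fix t assume t: "t \<in> {c<..<d} - N"
    then have "t \<in> {a<..<b} - N" using assms by auto
    then have "((\<lambda>t. p * f t + q * g t) has_real_derivative p * (\<beta> t * h t) + q * h t) (at t)"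
      by (intro DERIV_add DERIV_cmult deriv_f deriv_g)
    then show "\<exists>d\<ge>0. ((\<lambda>t. p * f t + q * g t) has_real_derivative d) (at t)"
      using nonneg[OF t] by blast
  qed
qed

lemma continuous_g: "continuous_on {a..b} g"
  using lip_g lipschitz_on_continuous_on by blast

lemma h_sign_const:
  assumes "a \<le> c" "d \<le> b" "\<And>t. t \<in> {c<..<d} \<Longrightarrow> \<bar>g t\<bar> < 1"
  shows "(\<forall>t\<in>{c<..<d}. h t > 0) \<or> (\<forall>t\<in>{c<..<d}. h t < 0)"
  by (rule connected_nonvanishing_sign)
    (use assms h_nonzero in \<open>auto intro: continuous_on_subset[OF continuous_h]\<close>)

lemma h_not_pos_before_zero:
  assumes "a \<le> c" "c < d" "d \<le> b" "f d = 0"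
  shows "\<not> (\<forall>t\<in>{c<..<d}. h t > 0)"
proof
  assume pos: "\<forall>t\<in>{c<..<d}. h t > 0"
  define m where "m = (c + d) / 2"
  have m: "c < m" "m < d" using assms by (auto simp: m_def)
  have "1 * f m + 0 * g m \<le> 1 * f d + 0 * g d"
  proof (rule combination_mono)
    fix t assume "t \<in> {m<..<d} - N"
    then have "\<beta> t > 0" "h t > 0" using assms m pos by (auto intro!: \<beta>_pos)
    then show "0 \<le> 1 * (\<beta> t * h t) + 0 * h t" by simp
  qed (use assms m in auto)
  moreover have "f m > 0" using f_pos m assms by auto
  ultimately show False using assms by simp
qed

lemma h_not_neg_after_zero:
  assumes "a \<le> c" "c < d" "d \<le> b" "f c = 0"
  shows "\<not> (\<forall>t\<in>{c<..<d}. h t < 0)"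
proof
  assume neg: "\<forall>t\<in>{c<..<d}. h t < 0"
  define m where "m = (c + d) / 2"
  have m: "c < m" "m < d" using assms by (auto simp: m_def)
  have "(-1) * f c + 0 * g c \<le> (-1) * f m + 0 * g m"
  proof (rule combination_mono)
    fix t assume "t \<in> {c<..<m} - N"
    then have "\<beta> t > 0" "h t < 0" using assms m neg by (auto intro!: \<beta>_pos)
    then show "0 \<le> -1 * (\<beta> t * h t) + 0 * h t" using mult_pos_neg[of "\<beta> t" "h t"] by simp
  qed (use assms m in auto)
  moreover have "f m > 0" using f_pos m assms by auto
  ultimately show False using assms by simp
qed

definition "unit_points = {t \<in> {a..b}. \<bar>g t\<bar> = 1}"

lemma closed_unit_points: "closed unit_points"
  unfolding unit_points_def
  by (intro continuous_closed_preimage_constant continuous_intros continuous_g)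

lemma unit_points_nonempty: "unit_points \<noteq> {}"
proof
  assume "unit_points = {}"
  then have "\<bar>g t\<bar> < 1" if "t \<in> {a<..<b}" for t
    using g_le[of t] that unfolding unit_points_def by (force simp: less_le)
  then show False
    using h_sign_const[of a b] h_not_pos_before_zero[of a b] h_not_neg_after_zero[of a b] ab f_a f_b
    by auto
qed

definition "first_unit = Inf unit_points"
definition "last_unit = Sup unit_points"

lemma bdd_unit_points: "bdd_below unit_points" "bdd_above unit_points"
  by (auto simp: unit_points_def bdd_below_def bdd_above_def)

lemma first_unit_mem: "first_unit \<in> unit_points"
  unfolding first_unit_def
  using closed_contains_Inf[OF unit_points_nonempty bdd_unit_points(1) closed_unit_points] .

lemma last_unit_mem: "last_unit \<in> unit_points"
  unfolding last_unit_def
  using closed_contains_Sup[OF unit_points_nonempty bdd_unit_points(2) closed_unit_points] .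

lemma first_unit_le: "t \<in> unit_points \<Longrightarrow> first_unit \<le> t"
  unfolding first_unit_def using bdd_unit_points(1) by (rule cInf_lower[rotated])

lemma last_unit_ge: "t \<in> unit_points \<Longrightarrow> t \<le> last_unit"
  unfolding last_unit_def using bdd_unit_points(2) by (rule cSup_upper[rotated])

lemma unit_bounds: "a < first_unit" "first_unit \<le> last_unit" "last_unit < b"
proof -
  show "a < first_unit" using first_unit_mem g_a by (cases "first_unit = a") (auto simp: unit_points_def)
  show "last_unit < b" using last_unit_mem g_b by (cases "last_unit = b") (auto simp: unit_points_def)
  show "first_unit \<le> last_unit" using first_unit_mem last_unit_ge by blast
qed

lemma h_pos_before_first_unit: "t \<in> {a<..<first_unit} \<Longrightarrow> h t > 0"
proof -
  have "\<bar>g t\<bar> < 1" if "t \<in> {a<..<first_unit}" for t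
    using first_unit_le[of t] g_le[of t] unit_bounds that by (force simp: unit_points_def less_le)
  then show "t \<in> {a<..<first_unit} \<Longrightarrow> h t > 0"
    using h_sign_const[of a first_unit] h_not_neg_after_zero[of a first_unit] unit_bounds f_a
    by auto
qed

lemma h_neg_after_last_unit: "t \<in> {last_unit<..<b} \<Longrightarrow> h t < 0"
proof -
  have "\<bar>g t\<bar> < 1" if "t \<in> {last_unit<..<b}" for t
    using last_unit_ge[of t] g_le[of t] unit_bounds that by (force simp: unit_points_def less_le)
  then show "t \<in> {last_unit<..<b} \<Longrightarrow> h t < 0"
    using h_sign_const[of last_unit b] h_not_pos_before_zero[of last_unit b] unit_bounds f_b
    by auto
qed

lemma g_first_unit: "g first_unit = 1"
proof -
  have "0 * f a + 1 * g a \<le> 0 * f first_unit + 1 * g first_unit"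
    by (rule combination_mono) (use unit_bounds h_pos_before_first_unit in \<open>auto intro: less_imp_le\<close>)
  then show ?thesis using first_unit_mem g_a by (auto simp: unit_points_def abs_if split: if_splits)
qed

lemma g_last_unit: "g last_unit = 1"
proof -
  have "0 * f last_unit + (-1) * g last_unit \<le> 0 * f b + (-1) * g b"
    by (rule combination_mono) (use unit_bounds h_neg_after_last_unit in \<open>auto intro: less_imp_le\<close>)
  then show ?thesis using last_unit_mem g_b by (auto simp: unit_points_def abs_if split: if_splits)
qed

lemma g_attains_one: "\<exists>s\<in>{a<..<b}. g s = 1"
  using g_first_unit unit_bounds by auto

lemma g_eq_one_between_units:
  assumes above: "\<And>t. t \<in> {a..b} \<Longrightarrow> g t > -1" and t: "t \<in> {first_unit..last_unit}"
  shows "g t = 1"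
proof (rule ccontr)
  assume "g t \<noteq> 1"
  moreover have "t \<in> {a..b}" using t unit_bounds by auto
  ultimately have "\<bar>g t\<bar> < 1" using g_le above by (force simp: abs_if)
  then have "t \<notin> unit_points" by (auto simp: unit_points_def)
  then obtain c d where cd: "c \<in> unit_points" "d \<in> unit_points" "c < t" "t < d"
    and between: "unit_points \<inter> {c<..<d} = {}"
    using closed_set_gap[OF closed_unit_points first_unit_mem last_unit_mem] t by (metis atLeastAtMost_iff)
  have "a \<le> c" "d \<le> b" using cd by (auto simp: unit_points_def)
  then have "g c = 1" "g d = 1"
    using cd above[of c] above[of d] by (auto simp: unit_points_def abs_if split: if_splits)
  have "\<bar>g x\<bar> < 1" if "x \<in> {c<..<d}" for x
  proof -
    have "x \<in> {a..b}" "x \<notin> unit_points" using between that \<open>a \<le> c\<close> \<open>d \<le> b\<close> by auto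
    then show ?thesis using g_le[of x] by (auto simp: unit_points_def less_le)
  qed
  then consider "\<forall>x\<in>{c<..<d}. h x > 0" | "\<forall>x\<in>{c<..<d}. h x < 0"
    using h_sign_const \<open>a \<le> c\<close> \<open>d \<le> b\<close> by blast
  then show False
  proof cases
    case 1
    have "0 * f c + 1 * g c \<le> 0 * f t + 1 * g t"
      by (rule combination_mono) (use cd \<open>d \<le> b\<close> \<open>a \<le> c\<close> 1 in \<open>auto intro: less_imp_le\<close>)
    then show False using \<open>g c = 1\<close> \<open>\<bar>g t\<bar> < 1\<close> by simp
  next
    case 2
    have "0 * f t + (-1) * g t \<le> 0 * f d + (-1) * g d"
      by (rule combination_mono) (use cd \<open>d \<le> b\<close> \<open>a \<le> c\<close> 2 in \<open>auto intro: less_imp_le\<close>)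
    then show False using \<open>g d = 1\<close> \<open>\<bar>g t\<bar> < 1\<close> by simp
  qed
qed

lemma f_first_unit_eq_last_unit:
  assumes above: "\<And>t. t \<in> {a..b} \<Longrightarrow> g t > -1"
  shows "f first_unit = f last_unit"
proof -
  have h_zero: "h t = 0" if t: "t \<in> {first_unit<..<last_unit} - N" for t
  proof -
    have "t \<in> {a<..<b} - N" using t unit_bounds by auto
    then have "((\<lambda>_. 1::real) has_real_derivative h t) (at t)"
      by (rule has_field_derivative_transform_within_open[OF deriv_g, of _ "{first_unit<..<last_unit}"])
        (use t g_eq_one_between_units[OF above] in auto)
    then show ?thesis using DERIV_const DERIV_unique by blast
  qed
  have "1 * f first_unit + 0 * g first_unit \<le> 1 * f last_unit + 0 * g last_unit"
    by (intro combination_mono) (use unit_bounds h_zero in auto)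
  moreover have "(-1) * f first_unit + 0 * g first_unit \<le> (-1) * f last_unit + 0 * g last_unit"
    by (intro combination_mono) (use unit_bounds h_zero in auto)
  ultimately show ?thesis by simp
qed

text \<open>With \<open>m \<le> \<beta> \<le> M\<close>, the slope \<open>f' = \<beta> g'\<close> lies between \<open>m g'\<close> and \<open>M g'\<close> on the monotone
  pieces \<open>[a, first_unit]\<close> and \<open>[last_unit, b]\<close>; the value \<open>f first_unit = f last_unit\<close> is thereby
  estimated in terms of \<open>1 - g a\<close> and of \<open>1 - g b\<close>.\<close>

lemma ratio_estimate:
  assumes above: "\<And>t. t \<in> {a..b} \<Longrightarrow> g t > -1"
    and lower: "\<And>t. t \<in> {a<..<b} \<Longrightarrow> m \<le> \<beta> t" and upper: "\<And>t. t \<in> {a<..<b} \<Longrightarrow> \<beta> t \<le> M"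
  shows "m * (1 - g a) \<le> M * (1 - g b)" "m * (1 - g b) \<le> M * (1 - g a)"
proof -
  have "1 * f a + (-m) * g a \<le> 1 * f first_unit + (-m) * g first_unit"
  proof (rule combination_mono)
    fix t assume "t \<in> {a<..<first_unit} - N"
    then have "(\<beta> t - m) * h t \<ge> 0"
      using lower[of t] h_pos_before_first_unit[of t] unit_bounds by (auto intro!: mult_nonneg_nonneg)
    then show "0 \<le> 1 * (\<beta> t * h t) + - m * h t" by (simp add: algebra_simps)
  qed (use unit_bounds in auto)
  moreover have "(-1) * f a + M * g a \<le> (-1) * f first_unit + M * g first_unit"
  proof (rule combination_mono)
    fix t assume "t \<in> {a<..<first_unit} - N"
    then have "(M - \<beta> t) * h t \<ge> 0"
      using upper[of t] h_pos_before_first_unit[of t] unit_bounds by (auto intro!: mult_nonneg_nonneg)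
    then show "0 \<le> -1 * (\<beta> t * h t) + M * h t" by (simp add: algebra_simps)
  qed (use unit_bounds in auto)
  moreover have "1 * f last_unit + (-M) * g last_unit \<le> 1 * f b + (-M) * g b"
  proof (rule combination_mono)
    fix t assume "t \<in> {last_unit<..<b} - N"
    then have "(\<beta> t - M) * h t \<ge> 0"
      using upper[of t] h_neg_after_last_unit[of t] unit_bounds by (auto intro!: mult_nonpos_nonpos)
    then show "0 \<le> 1 * (\<beta> t * h t) + - M * h t" by (simp add: algebra_simps)
  qed (use unit_bounds in auto)
  moreover have "(-1) * f last_unit + m * g last_unit \<le> (-1) * f b + m * g b"
  proof (rule combination_mono)
    fix t assume "t \<in> {last_unit<..<b} - N"
    then have "(m - \<beta> t) * h t \<ge> 0"
      using lower[of t] h_neg_after_last_unit[of t] unit_bounds by (auto intro!: mult_nonpos_nonpos)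
    then show "0 \<le> -1 * (\<beta> t * h t) + m * h t" by (simp add: algebra_simps)
  qed (use unit_bounds in auto)
  ultimately show "m * (1 - g a) \<le> M * (1 - g b)" "m * (1 - g b) \<le> M * (1 - g a)"
    using f_first_unit_eq_last_unit[OF above] g_first_unit g_last_unit f_a f_b
    by (simp_all add: algebra_simps)
qed

end

locale standing_assumptions =
  fixes L :: real and beta :: "real \<Rightarrow> real" and k :: real
    and tau tau' u u' :: "real \<Rightarrow> 'a::euclidean_space" and lam :: 'a
  assumes L: "L > 0"
    and beta_pos: "\<forall>t\<in>{0..L}. beta t > 0"
    and beta_bv: "bounded_variation_on {0..L} beta"
    and beta_inv_bdd: "\<exists>B. \<forall>t\<in>{0..L}. 1 / beta t \<le> B"
    and tau_lip: "\<exists>C. C-lipschitz_on {0..L} tau"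
    and tau_sphere: "\<forall>t\<in>{0..L}. norm (tau t) = 1"
    and tau_deriv: "AE t in lebesgue_on {0<..<L}. (tau has_vector_derivative tau' t) (at t)"
    and k_pos: "k > 0"
    and lam: "norm lam = 1"
    and u_lip: "\<exists>C. C-lipschitz_on {0..L} u"
    and u_deriv: "AE t in lebesgue_on {0<..<L}. (u has_vector_derivative u' t) (at t)"
    and eq1: "AE t in lebesgue_on {0<..<L}.
               u' t + (u t \<bullet> tau' t) *\<^sub>R tau t = beta t *\<^sub>R (lam - (lam \<bullet> tau t) *\<^sub>R tau t)"
    and eq2: "AE t in lebesgue_on {0<..<L}. norm (u t) *\<^sub>R tau' t = k *\<^sub>R u t"
    and dep: "\<forall>t\<in>{0..L}. k * norm (u t) > 0 \<longrightarrow>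
               (\<forall>d. (tau has_vector_derivative d) (at t within {0..L}) \<longrightarrow>
                  (\<exists>a b c. (a, b, c) \<noteq> (0, 0, 0) \<and> a *\<^sub>R tau t + b *\<^sub>R d + c *\<^sub>R lam = 0))"
begin

definition "Omega = {t\<in>{0..L}. k * norm (u t) > 0}"

definition "f t = k * norm (u t)"
definition "g t = lam \<bullet> tau t"

text \<open>By \<open>\<bar>u\<bar> \<tau>' = k u\<close> this is \<open>\<tau>'\<close> almost everywhere on \<open>\<Omega>\<close>; unlike \<open>\<tau>'\<close>, it is continuous there.\<close>

definition "T t = (k / norm (u t)) *\<^sub>R u t"
definition "h t = lam \<bullet> T t"

definition "regular t \<longleftrightarrow> (tau has_vector_derivative tau' t) (at t) \<and> (u has_vector_derivative u' t) (at t) \<and>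
    u' t + (u t \<bullet> tau' t) *\<^sub>R tau t = beta t *\<^sub>R (lam - (lam \<bullet> tau t) *\<^sub>R tau t) \<and>
    norm (u t) *\<^sub>R tau' t = k *\<^sub>R u t"

definition "irregular = {0<..<L} - {t. regular t}"

definition "Omega_interior = {t \<in> {0<..<L}. u t \<noteq> 0}"

lemma negligible_irregular: "negligible irregular"
proof -
  have "AE t in lebesgue_on {0<..<L}. regular t"
    using tau_deriv u_deriv eq1 eq2 unfolding regular_def by eventually_elim blast
  then show ?thesis
    unfolding irregular_def by (rule negligible_exception_of_AE_lebesgue_on)
qed

lemma continuous_tau: "continuous_on {0..L} tau"
  using tau_lip lipschitz_on_continuous_on by blast

lemma continuous_u: "continuous_on {0..L} u"
  using u_lip lipschitz_on_continuous_on by blast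

lemma continuous_g: "continuous_on {0..L} g"
  unfolding g_def by (intro continuous_intros continuous_tau)

lemma lipschitz_f: "\<exists>C. C-lipschitz_on {0..L} f"
proof -
  obtain C where C: "C-lipschitz_on {0..L} u" using u_lip by blast
  have "(k * C)-lipschitz_on {0..L} f"
  proof (rule lipschitz_onI)
    fix x y assume xy: "x \<in> {0..L}" "y \<in> {0..L}"
    have "dist (f x) (f y) = k * \<bar>norm (u x) - norm (u y)\<bar>"
      using k_pos by (simp add: f_def dist_real_def abs_mult right_diff_distrib[symmetric])
    also have "\<dots> \<le> k * dist (u x) (u y)"
      using k_pos norm_triangle_ineq3 by (simp add: dist_norm)
    also have "\<dots> \<le> k * (C * dist x y)"
      using lipschitz_onD[OF C xy] k_pos by simp
    finally show "dist (f x) (f y) \<le> k * C * dist x y" by simp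
  qed (use lipschitz_on_nonneg[OF C] k_pos in simp)
  then show ?thesis by blast
qed

lemma lipschitz_g: "\<exists>C. C-lipschitz_on {0..L} g"
proof -
  obtain C where C: "C-lipschitz_on {0..L} tau" using tau_lip by blast
  have "C-lipschitz_on {0..L} g"
  proof (rule lipschitz_onI)
    fix x y assume xy: "x \<in> {0..L}" "y \<in> {0..L}"
    have "dist (g x) (g y) = \<bar>lam \<bullet> (tau x - tau y)\<bar>"
      by (simp add: g_def dist_real_def inner_diff_right)
    also have "\<dots> \<le> norm lam * norm (tau x - tau y)" by (rule Cauchy_Schwarz_ineq2)
    also have "\<dots> \<le> C * dist x y" using lam lipschitz_onD[OF C xy] by (simp add: dist_norm)
    finally show "dist (g x) (g y) \<le> C * dist x y" .
  qed (use lipschitz_on_nonneg[OF C] in simp)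
  then show ?thesis by blast
qed

lemma abs_g_le_1: "t \<in> {0..L} \<Longrightarrow> \<bar>g t\<bar> \<le> 1"
  using Cauchy_Schwarz_ineq2[of lam "tau t"] lam tau_sphere by (simp add: g_def)

lemma abs_g_eq_1_iff: "t \<in> {0..L} \<Longrightarrow> \<bar>g t\<bar> = 1 \<longleftrightarrow> tau t = lam \<or> tau t = - lam"
proof -
  assume "t \<in> {0..L}"
  then have unit: "norm (tau t) = 1" using tau_sphere by blast
  have "\<bar>g t\<bar> = 1 \<longleftrightarrow> \<bar>lam \<bullet> tau t\<bar> = norm lam * norm (tau t)"
    using lam unit by (simp add: g_def)
  also have "\<dots> \<longleftrightarrow> tau t = lam \<or> tau t = - lam"
    using norm_cauchy_schwarz_abs_eq[of lam "tau t"] lam unit by (auto simp: eq_neg_iff_add_eq_0 add.commute)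
  finally show ?thesis .
qed

lemma open_Omega_interior: "open Omega_interior"
proof -
  have "continuous_on {0<..<L} u" using continuous_u by (rule continuous_on_subset) auto
  then have "open ({0<..<L} \<inter> u -` (- {0}))"
    by (intro continuous_open_preimage) auto
  then show ?thesis by (simp add: Omega_interior_def Int_def conj_commute)
qed

lemma tau'_eq_T:
  assumes "t \<in> Omega_interior" "regular t"
  shows "tau' t = T t"
proof -
  have "norm (u t) > 0" using assms(1) by (simp add: Omega_interior_def)
  then have "tau' t = (1 / norm (u t)) *\<^sub>R (norm (u t) *\<^sub>R tau' t)" by simp
  also have "\<dots> = T t" using assms(2) by (simp add: regular_def T_def)
  finally show ?thesis .
qed

lemma tau_orthogonal_T:
  assumes "t \<in> Omega_interior" "regular t"
  shows "tau t \<bullet> T t = 0"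
proof -
  have "tau t \<bullet> tau' t = 0"
    by (rule unit_curve_derivative_orthogonal[of tau _ t "{0<..<L}"])
      (use assms tau_sphere in \<open>auto simp: regular_def Omega_interior_def\<close>)
  then show ?thesis using tau'_eq_T[OF assms] by simp
qed

lemma norm_T: "t \<in> Omega_interior \<Longrightarrow> norm (T t) = k"
  using k_pos by (simp add: T_def Omega_interior_def)

lemma deriv_g_regular:
  assumes "t \<in> Omega_interior" "regular t"
  shows "(g has_real_derivative h t) (at t)"
proof -
  have "(tau has_vector_derivative T t) (at t)"
    using assms tau'_eq_T[OF assms] by (simp add: regular_def)
  then show ?thesis
    unfolding g_def[abs_def] h_def has_real_derivative_iff_has_vector_derivative
    by (rule bounded_linear.has_vector_derivative[OF bounded_linear_inner_right])
qed

text \<open>Since \<open>u \<perp> \<tau>\<close>, the equation for \<open>u'\<close> gives \<open>u' \<bullet> u = \<beta> (\<lambda> \<bullet> u)\<close>, i.e. \<open>f' = \<beta> (\<lambda> \<bullet> \<tau>')\<close>.\<close>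

lemma deriv_f_regular:
  assumes "t \<in> Omega_interior" "regular t"
  shows "(f has_real_derivative beta t * h t) (at t)"
proof -
  have ut: "u t \<noteq> 0" using assms(1) by (simp add: Omega_interior_def)
  have "((\<lambda>s. k * norm (u s)) has_real_derivative k * (u' t \<bullet> sgn (u t))) (at t)"
    using has_real_derivative_norm[of u "u' t" t] assms(2) ut by (auto intro: DERIV_cmult simp: regular_def)
  moreover have "k * (u' t \<bullet> sgn (u t)) = beta t * h t"
  proof -
    have "tau t \<bullet> u t = 0"
      using tau_orthogonal_T[OF assms] ut k_pos by (simp add: T_def)
    then have orth: "tau t \<bullet> u t = 0" "u t \<bullet> tau t = 0" by (simp_all add: inner_commute)
    have "u' t = beta t *\<^sub>R (lam - (lam \<bullet> tau t) *\<^sub>R tau t) - (u t \<bullet> tau' t) *\<^sub>R tau t"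
      using assms(2) by (simp add: regular_def algebra_simps)
    then have "u' t \<bullet> u t = beta t * (lam \<bullet> u t)"
      by (simp add: inner_diff_left orth)
    then show ?thesis
      by (simp add: h_def T_def sgn_div_norm divide_inverse mult.left_commute)
  qed
  ultimately show ?thesis by (simp add: f_def[abs_def])
qed

lemma lam_expansion_regular:
  assumes "t \<in> Omega_interior" "regular t"
  shows "lam = g t *\<^sub>R tau t + (h t / k\<^sup>2) *\<^sub>R T t"
proof -
  have "t \<in> {0..L}" "k * norm (u t) > 0" using assms(1) k_pos by (auto simp: Omega_interior_def)
  moreover have "(tau has_vector_derivative tau' t) (at t within {0..L})"
    using assms(2) by (auto simp: regular_def intro: has_vector_derivative_at_within)
  ultimately obtain a b c where "(a, b, c) \<noteq> (0, 0, 0)" "a *\<^sub>R tau t + b *\<^sub>R T t + c *\<^sub>R lam = 0"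
    using dep tau'_eq_T[OF assms] by metis
  then show ?thesis
    using frame_expansion_of_dependent[OF _ tau_orthogonal_T[OF assms] norm_T[OF assms(1)] k_pos]
      tau_sphere \<open>t \<in> {0..L}\<close> by (simp add: g_def h_def)
qed

lemma lam_expansion:
  assumes "t \<in> Omega_interior"
  shows "lam = g t *\<^sub>R tau t + (h t / k\<^sup>2) *\<^sub>R T t"
proof -
  have "continuous_on Omega_interior u" "continuous_on Omega_interior tau" "continuous_on Omega_interior g"
    using continuous_u continuous_tau continuous_g by (auto elim!: continuous_on_subset simp: Omega_interior_def)
  then have "continuous_on Omega_interior T" "continuous_on Omega_interior h"
    unfolding h_def T_def by (intro continuous_intros; simp add: Omega_interior_def)+
  then have "continuous_on Omega_interior (\<lambda>t. g t *\<^sub>R tau t + (h t / k\<^sup>2) *\<^sub>R T t)"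
    using \<open>continuous_on Omega_interior g\<close> \<open>continuous_on Omega_interior tau\<close> k_pos by (intro continuous_intros) auto
  moreover have "Omega_interior - irregular \<subseteq> {t. regular t}"
    by (auto simp: Omega_interior_def irregular_def)
  ultimately show ?thesis
    using continuous_on_eq_off_negligible[OF open_Omega_interior negligible_irregular continuous_on_const]
      lam_expansion_regular assms by blast
qed

lemma h_nonzero:
  assumes "t \<in> Omega_interior" "\<bar>g t\<bar> < 1"
  shows "h t \<noteq> 0"
proof
  assume "h t = 0"
  then have "lam = g t *\<^sub>R tau t" using lam_expansion[OF assms(1)] by simp
  moreover have "norm (tau t) = 1" using tau_sphere assms(1) by (auto simp: Omega_interior_def)
  ultimately have "norm lam = \<bar>g t\<bar>" by (metis mult.right_neutral norm_scaleR)
  then show False using lam assms(2) by simp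
qed

lemma zero_gap_between_zeros:
  assumes "0 \<le> a" "a < b" "b \<le> L" "u a = 0" "u b = 0" "\<bar>g a\<bar> < 1" "\<bar>g b\<bar> < 1"
    and nonzero: "\<And>t. t \<in> {a<..<b} \<Longrightarrow> u t \<noteq> 0"
  shows "zero_gap f g h beta a b irregular"
proof -
  have sub: "{a..b} \<subseteq> {0..L}" using assms by auto
  have Omega_interior: "t \<in> Omega_interior" if "t \<in> {a<..<b}" for t
    using that nonzero assms by (auto simp: Omega_interior_def)
  show ?thesis
  proof
    show "\<exists>C. C-lipschitz_on {a..b} f" using lipschitz_f lipschitz_on_subset[OF _ sub] by blast
    show "\<exists>C. C-lipschitz_on {a..b} g" using lipschitz_g lipschitz_on_subset[OF _ sub] by blast
    show "continuous_on {a<..<b} h"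
      unfolding h_def T_def
      by (intro continuous_intros continuous_on_subset[OF continuous_u]) (use assms nonzero in auto)
    show "(g has_real_derivative h t) (at t)" "(f has_real_derivative beta t * h t) (at t)"
      if "t \<in> {a<..<b} - irregular" for t
      using deriv_g_regular deriv_f_regular Omega_interior that assms(1,3) by (auto simp: irregular_def)
    show "h t \<noteq> 0" if "t \<in> {a<..<b}" "\<bar>g t\<bar> < 1" for t using h_nonzero Omega_interior that by blast
    show "beta t > 0" if "t \<in> {a<..<b}" for t using beta_pos that assms by auto
    show "f t > 0" if "t \<in> {a<..<b}" for t using nonzero[OF that] k_pos by (simp add: f_def)
    show "\<bar>g t\<bar> \<le> 1" if "t \<in> {a..b}" for t using abs_g_le_1 sub that by blast
  qed (use assms negligible_irregular in \<open>auto simp: f_def\<close>)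
qed

text \<open>On an interval where \<open>u\<close> vanishes, \<open>u' = 0\<close> a.e., so the equation for \<open>u'\<close> forces
  \<open>\<lambda> = (\<lambda> \<bullet> \<tau>) \<tau>\<close>.\<close>

lemma unit_point_where_u_vanishes:
  assumes "0 \<le> y" "y < w" "w \<le> L" and zero: "\<And>s. s \<in> {y<..<w} \<Longrightarrow> u s = 0"
  shows "\<exists>t\<in>{y<..<w}. \<bar>g t\<bar> = 1"
proof -
  have "\<not> negligible {y<..<w}" using assms(2) by (intro open_not_negligible) auto
  then obtain t where t: "t \<in> {y<..<w}" "t \<notin> irregular"
    using negligible_subset[OF negligible_irregular] by blast
  then have "regular t" "t \<in> {0..L}" using assms by (auto simp: irregular_def)
  then have "(u has_vector_derivative u' t) (at t)" by (simp add: regular_def)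
  moreover have "((\<lambda>_. 0) has_vector_derivative 0) (at t)" by (rule has_vector_derivative_const)
  ultimately have "u' t = 0"
    using has_vector_derivative_transform_within_open[of "\<lambda>_. 0" 0 t "{y<..<w}" u] zero t(1)
      vector_derivative_unique_at by fastforce
  then have "beta t *\<^sub>R (lam - g t *\<^sub>R tau t) = 0"
    using \<open>regular t\<close> zero[OF t(1)] by (simp add: regular_def g_def)
  moreover have "beta t > 0" using beta_pos \<open>t \<in> {0..L}\<close> by blast
  ultimately have "lam = g t *\<^sub>R tau t" by simp
  moreover have "norm (tau t) = 1" using tau_sphere \<open>t \<in> {0..L}\<close> by blast
  ultimately have "\<bar>g t\<bar> = norm lam" by (metis mult.right_neutral norm_scaleR)
  then show ?thesis using lam t(1) by auto
qed

lemma beta_lower_bound: "\<exists>m>0. \<forall>t\<in>{0..L}. m \<le> beta t"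
proof -
  obtain B where B: "\<And>t. t \<in> {0..L} \<Longrightarrow> 1 / beta t \<le> B" using beta_inv_bdd by blast
  have "0 < 1 / beta 0" using beta_pos L by simp
  also have "\<dots> \<le> B" using B L by simp
  finally have "B > 0" .
  have "1 / B \<le> beta t" if "t \<in> {0..L}" for t
    using B[OF that] beta_pos that \<open>B > 0\<close> by (simp add: field_simps)
  then show ?thesis using \<open>B > 0\<close> by (intro exI[of _ "1 / B"]) auto
qed

end

section \<open>The points of \<open>I - \<Omega>\<close>\<close>

locale standing_component = standing_assumptions +
  fixes I :: "real set"
  assumes component:
    "I \<in> components ({t\<in>{0..L}. tau t \<noteq> lam \<and> tau t \<noteq> - lam} \<union> {t\<in>{0..L}. k * norm (u t) > 0})"
begin

definition "zeros = I - Omega"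

lemma connected_I: "connected I"
  using component in_components_connected by blast

lemma I_subset: "I \<subseteq> {t\<in>{0..L}. tau t \<noteq> lam \<and> tau t \<noteq> - lam} \<union> Omega"
  using component in_components_subset unfolding Omega_def by blast

lemma I_maximal:
  assumes "connected D" "I \<subseteq> D" "D \<subseteq> {t\<in>{0..L}. tau t \<noteq> lam \<and> tau t \<noteq> - lam} \<union> Omega"
  shows "D = I"
proof -
  have "D \<noteq> {}" using component in_components_nonempty assms(2) by blast
  then show ?thesis using component assms unfolding in_components_maximal Omega_def by blast
qed

lemma I_interval: "y \<in> I \<Longrightarrow> w \<in> I \<Longrightarrow> {y..w} \<subseteq> I"
  using connected_I is_interval_connected_1 by (auto intro: mem_is_interval_1_I)

lemma zeros_iff: "t \<in> zeros \<longleftrightarrow> t \<in> I \<and> u t = 0"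
  using I_subset k_pos by (auto simp: zeros_def Omega_def zero_less_mult_iff)

lemma zeros_subset: "zeros \<subseteq> {0..L}"
  using I_subset by (auto simp: zeros_def Omega_def)

lemma abs_g_zeros:
  assumes "z \<in> zeros"
  shows "\<bar>g z\<bar> < 1"
proof -
  have "z \<in> {0..L}" "tau z \<noteq> lam" "tau z \<noteq> - lam"
    using assms I_subset by (auto simp: zeros_def Omega_def)
  then show ?thesis using abs_g_le_1 abs_g_eq_1_iff by (simp add: less_le)
qed

lemma closed_zeros_between:
  assumes "y \<in> zeros" "w \<in> zeros"
  shows "closed (zeros \<inter> {y..w})"
proof (cases "y \<le> w")
  case True
  then have "{y..w} \<subseteq> {0..L}" "{y..w} \<subseteq> I"
    using assms zeros_subset I_interval by (auto simp: zeros_iff)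
  then have "zeros \<inter> {y..w} = {t \<in> {y..w}. u t = 0}" by (auto simp: zeros_iff)
  moreover have "continuous_on {y..w} u"
    using continuous_u \<open>{y..w} \<subseteq> {0..L}\<close> by (rule continuous_on_subset)
  then have "closed {t \<in> {y..w}. u t = 0}"
    by (rule continuous_closed_preimage_constant) simp
  ultimately show ?thesis by simp
qed simp

lemma zero_gap_consecutive:
  assumes "a < b" "a \<in> zeros" "b \<in> zeros" "zeros \<inter> {a<..<b} = {}"
  shows "zero_gap f g h beta a b irregular"
proof (rule zero_gap_between_zeros)
  show "u t \<noteq> 0" if "t \<in> {a<..<b}" for t
  proof -
    have "t \<in> I" using that assms(2,3) I_interval[of a b] by (auto simp: zeros_iff)
    moreover have "t \<notin> zeros" using that assms(4) by blast
    ultimately show ?thesis by (simp add: zeros_iff)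
  qed
qed (use assms zeros_subset abs_g_zeros in \<open>auto simp: zeros_iff\<close>)

lemma unit_point_between_zeros:
  assumes "y < w" "y \<in> zeros" "w \<in> zeros"
  shows "\<exists>t\<in>{y<..<w}. \<bar>g t\<bar> = 1"
proof (cases "{y<..<w} \<subseteq> zeros")
  case True
  have "0 \<le> y" "w \<le> L" using assms(2,3) zeros_subset by auto
  moreover have "u s = 0" if "s \<in> {y<..<w}" for s using True that by (auto simp: zeros_iff)
  ultimately show ?thesis using unit_point_where_u_vanishes[of y w] assms(1) by blast
next
  case False
  then obtain t where "t \<in> {y<..<w}" "t \<notin> zeros" by blast
  then obtain a b where gap: "a \<in> zeros" "b \<in> zeros" "y \<le> a" "a < t" "t < b" "b \<le> w"
    and "zeros \<inter> {y..w} \<inter> {a<..<b} = {}"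
    using closed_set_gap[OF closed_zeros_between[OF assms(2,3)], of y w t] assms by auto
  then have "zeros \<inter> {a<..<b} = {}" by auto
  then interpret zero_gap f g h beta a b irregular
    using zero_gap_consecutive gap by auto
  obtain s where "s \<in> {a<..<b}" "g s = 1" using g_attains_one by blast
  then show ?thesis using gap by (intro bexI[of _ s]) auto
qed

lemma zeros_isolated:
  assumes "z \<in> zeros"
  shows "\<exists>r>0. \<forall>x\<in>zeros. \<bar>x - z\<bar> < r \<longrightarrow> x = z"
proof -
  have "z \<in> {0..L}" "\<bar>g z\<bar> < 1" using assms zeros_subset abs_g_zeros by auto
  then obtain r where "r > 0" and r: "\<And>t. t \<in> {0..L} \<Longrightarrow> dist t z < r \<Longrightarrow> dist (g t) (g z) < 1 - \<bar>g z\<bar>"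
    using continuous_g unfolding continuous_on_iff by (metis diff_gt_0_iff_gt)
  have "x = z" if "x \<in> zeros" "\<bar>x - z\<bar> < r" for x
  proof (rule ccontr)
    assume "x \<noteq> z"
    then have "min x z < max x z" "min x z \<in> zeros" "max x z \<in> zeros"
      using assms that(1) by (auto simp: min_def max_def)
    then obtain t where t: "t \<in> {min x z<..<max x z}" "\<bar>g t\<bar> = 1"
      using unit_point_between_zeros by blast
    then have "t \<in> {0..L}" using zeros_subset assms that(1) by (auto simp: min_def max_def split: if_splits)
    moreover have "dist t z < r" using t(1) that(2) by (auto simp: dist_real_def min_def max_def split: if_splits)
    ultimately show False using r[of t] t(2) by (auto simp: dist_real_def)
  qed
  with \<open>r > 0\<close> show ?thesis by (intro exI[of _ r]) auto
qed

definition "zero_chain zs \<longleftrightarrow> ((\<forall>n. zs n < zs (Suc n)) \<or> (\<forall>n. zs (Suc n) < zs n)) \<and>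
    (\<forall>n. zs n \<in> zeros \<and> zeros \<inter> {min (zs n) (zs (Suc n))<..<max (zs n) (zs (Suc n))} = {})"

lemma zero_chain_mem: "zero_chain zs \<Longrightarrow> zs n \<in> zeros"
  by (simp add: zero_chain_def)

lemma zero_chain_link:
  assumes "zero_chain zs"
  shows "min (zs n) (zs (Suc n)) < max (zs n) (zs (Suc n))"
    and "min (zs n) (zs (Suc n)) \<in> zeros" "max (zs n) (zs (Suc n)) \<in> zeros"
    and "zeros \<inter> {min (zs n) (zs (Suc n))<..<max (zs n) (zs (Suc n))} = {}"
proof -
  have "zs n \<noteq> zs (Suc n)" using assms unfolding zero_chain_def by (metis less_irrefl)
  then show "min (zs n) (zs (Suc n)) < max (zs n) (zs (Suc n))" by (simp add: min_def max_def)
  have "zs n \<in> zeros" "zs (Suc n) \<in> zeros" using assms by (simp_all add: zero_chain_def)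
  then show "min (zs n) (zs (Suc n)) \<in> zeros" "max (zs n) (zs (Suc n)) \<in> zeros"
    by (simp_all add: min_def max_def)
  show "zeros \<inter> {min (zs n) (zs (Suc n))<..<max (zs n) (zs (Suc n))} = {}"
    using assms by (simp add: zero_chain_def)
qed

lemma zero_chain_gap:
  "zero_chain zs \<Longrightarrow> zero_gap f g h beta (min (zs n) (zs (Suc n))) (max (zs n) (zs (Suc n))) irregular"
  using zero_gap_consecutive zero_chain_link by blast

lemma zero_chain_subset:
  "zero_chain zs \<Longrightarrow> {min (zs n) (zs (Suc n))..max (zs n) (zs (Suc n))} \<subseteq> {0..L}"
  using zero_chain_link(2,3)[of zs n] zeros_subset by auto

lemma zero_chain_limit:
  assumes chain: "zero_chain zs" and lim: "zs \<longlonglongrightarrow> e"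
  shows "e \<in> {0..L}" and "tau e = lam \<or> tau e = - lam"
proof -
  have zs: "zs n \<in> zeros" for n using chain by (simp add: zero_chain_def)
  then have zs_in: "zs n \<in> {0..L}" for n using zeros_subset by blast
  then show "e \<in> {0..L}" using closed_sequentially[OF closed_atLeastAtMost] lim by blast
  have "zs n \<noteq> e" for n
    using chain unfolding zero_chain_def
  proof (elim conjE disjE)
    assume inc: "\<forall>n. zs n < zs (Suc n)"
    then have "incseq zs" by (intro incseq_SucI less_imp_le) blast
    then have "zs (Suc n) \<le> e" using incseq_le lim by blast
    then show ?thesis using inc by (metis not_le)
  next
    assume dec: "\<forall>n. zs (Suc n) < zs n"
    then have "decseq zs" by (intro decseq_SucI less_imp_le) blast
    then have "e \<le> zs (Suc n)" using decseq_ge lim by blast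
    then show ?thesis using dec by (metis not_le)
  qed
  have "e \<notin> I"
  proof
    assume "e \<in> I"
    have "(\<lambda>n. u (zs n)) \<longlonglongrightarrow> u e"
      using continuous_on_tendsto_compose[OF continuous_u lim \<open>e \<in> {0..L}\<close>] zs_in by simp
    moreover have "(\<lambda>n. u (zs n)) = (\<lambda>n. 0)" using zs by (simp add: zeros_iff)
    ultimately have "u e = 0" using LIMSEQ_unique[OF _ tendsto_const] by metis
    with \<open>e \<in> I\<close> have "e \<in> zeros" by (simp add: zeros_iff)
    then obtain r where "r > 0" and r: "\<forall>x\<in>zeros. \<bar>x - e\<bar> < r \<longrightarrow> x = e"
      using zeros_isolated by blast
    obtain n where "dist (zs n) e < r" using LIMSEQ_D[OF lim \<open>r > 0\<close>] by (auto simp: dist_norm)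
    then show False using r zs[of n] \<open>zs n \<noteq> e\<close> by (simp add: dist_real_def)
  qed
  have "e \<in> closure I"
    unfolding closure_sequential using zs lim by (auto simp: zeros_def)
  then have "insert e I \<subseteq> closure I" using closure_subset by blast
  then have "connected (insert e I)" by (intro connected_intermediate_closure[OF connected_I]) auto
  then have "\<not> insert e I \<subseteq> {t\<in>{0..L}. tau t \<noteq> lam \<and> tau t \<noteq> - lam} \<union> Omega"
    using I_maximal[of "insert e I"] \<open>e \<notin> I\<close> by blast
  then have "e \<notin> {t\<in>{0..L}. tau t \<noteq> lam \<and> tau t \<noteq> - lam}" using I_subset by blast
  then show "tau e = lam \<or> tau e = - lam" using \<open>e \<in> {0..L}\<close> by blast
qed

lemma zero_chain_near_limit:
  assumes chain: "zero_chain zs" and lim: "zs \<longlonglongrightarrow> e" and "\<epsilon> > 0"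
  shows "\<exists>n0. \<forall>n\<ge>n0. \<forall>t\<in>{min (zs n) (zs (Suc n))..max (zs n) (zs (Suc n))}. \<bar>g t - g e\<bar> < \<epsilon>"
proof -
  obtain \<delta> where "\<delta> > 0" and \<delta>: "\<And>t. t \<in> {0..L} \<Longrightarrow> dist t e < \<delta> \<Longrightarrow> dist (g t) (g e) < \<epsilon>"
    using continuous_g zero_chain_limit(1)[OF chain lim] \<open>\<epsilon> > 0\<close> unfolding continuous_on_iff by blast
  obtain n0 where n0: "\<And>n. n \<ge> n0 \<Longrightarrow> dist (zs n) e < \<delta>"
    using LIMSEQ_D[OF lim \<open>\<delta> > 0\<close>] by (auto simp: dist_norm)
  have "\<bar>g t - g e\<bar> < \<epsilon>" if "n \<ge> n0" "t \<in> {min (zs n) (zs (Suc n))..max (zs n) (zs (Suc n))}" for n t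
  proof -
    have "dist t e < \<delta>"
      using n0[of n] n0[of "Suc n"] that by (auto simp: dist_real_def min_def max_def split: if_splits)
    moreover have "t \<in> {0..L}" using that(2) zero_chain_subset[OF chain, of n] by blast
    ultimately show ?thesis using \<delta>[of t] by (simp add: dist_real_def)
  qed
  then show ?thesis by blast
qed

lemma zero_chain_limit_not_antipodal:
  assumes chain: "zero_chain zs" and lim: "zs \<longlonglongrightarrow> e"
  shows "tau e \<noteq> - lam"
proof
  assume "tau e = - lam"
  then have "g e = -1" using lam by (simp add: g_def dot_square_norm)
  obtain n where n: "\<forall>t\<in>{min (zs n) (zs (Suc n))..max (zs n) (zs (Suc n))}. \<bar>g t - g e\<bar> < 1"
    using zero_chain_near_limit[OF chain lim, of 1] by auto
  interpret zero_gap f g h beta "min (zs n) (zs (Suc n))" "max (zs n) (zs (Suc n))" irregular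
    using zero_chain_gap[OF chain] .
  obtain s where "s \<in> {min (zs n) (zs (Suc n))<..<max (zs n) (zs (Suc n))}" "g s = 1"
    using g_attains_one by blast
  then have "s \<in> {min (zs n) (zs (Suc n))..max (zs n) (zs (Suc n))}" by auto
  then have "\<bar>g s - g e\<bar> < 1" using n by blast
  then show False using \<open>g s = 1\<close> \<open>g e = -1\<close> by simp
qed

lemma zero_chain_ratio_step:
  assumes chain: "zero_chain zs"
    and above: "\<And>t. t \<in> {min (zs n) (zs (Suc n))..max (zs n) (zs (Suc n))} \<Longrightarrow> g t > -1"
    and bounds: "\<And>t. t \<in> {min (zs n) (zs (Suc n))..max (zs n) (zs (Suc n))} \<Longrightarrow> m \<le> beta t \<and> beta t \<le> M"
  shows "m * (1 - g (zs n)) \<le> M * (1 - g (zs (Suc n)))"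
proof -
  interpret zero_gap f g h beta "min (zs n) (zs (Suc n))" "max (zs n) (zs (Suc n))" irregular
    using zero_chain_gap[OF chain] .
  have "m * (1 - g (min (zs n) (zs (Suc n)))) \<le> M * (1 - g (max (zs n) (zs (Suc n))))"
    "m * (1 - g (max (zs n) (zs (Suc n)))) \<le> M * (1 - g (min (zs n) (zs (Suc n))))"
    using ratio_estimate[of m M] above bounds by auto
  then show ?thesis by (cases "zs n \<le> zs (Suc n)") (auto simp: min_def max_def)
qed

lemma zero_chain_summable_oscillation:
  assumes chain: "zero_chain zs"
  shows "summable (\<lambda>n. Sup (beta ` {min (zs n) (zs (Suc n))..max (zs n) (zs (Suc n))}) -
                        Inf (beta ` {min (zs n) (zs (Suc n))..max (zs n) (zs (Suc n))}))"
proof (rule bounded_variation_summable_oscillation[OF beta_bv _ zero_chain_subset[OF chain]])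
  have "(\<forall>n. zs n < zs (Suc n)) \<or> (\<forall>n. zs (Suc n) < zs n)"
    using chain by (simp add: zero_chain_def)
  then show "(\<forall>n. max (zs n) (zs (Suc n)) \<le> min (zs (Suc n)) (zs (Suc (Suc n)))) \<or>
      (\<forall>n. max (zs (Suc n)) (zs (Suc (Suc n))) \<le> min (zs n) (zs (Suc n)))"
    by (metis less_imp_le max.absorb2 max.absorb1 min.absorb1 min.absorb2 order_refl)
qed simp

text \<open>If \<open>\<tau> = \<lambda>\<close> at the limit, then \<open>g > -1\<close> on the late gaps, so their ratio estimates keep
  \<open>1 - g\<close> along the chain from decaying, whereas it must tend to \<open>1 - g e = 0\<close>.\<close>

lemma zero_chain_limit_not_lam:
  assumes chain: "zero_chain zs" and lim: "zs \<longlonglongrightarrow> e"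
  shows "tau e \<noteq> lam"
proof
  assume "tau e = lam"
  then have "g e = 1" using lam by (simp add: g_def dot_square_norm)
  define J where "J n = {min (zs n) (zs (Suc n))..max (zs n) (zs (Suc n))}" for n
  define m where "m n = Inf (beta ` J n)" for n
  define M where "M n = Sup (beta ` J n)" for n
  define x where "x n = 1 - g (zs n)" for n
  have "J n \<subseteq> {0..L}" "J n \<noteq> {}" for n
    using zero_chain_subset[OF chain] zero_chain_link(1)[OF chain] by (auto simp: J_def)
  note bdd = bounded_variation_on_bdd[OF beta_bv this(1)]
  have bounds: "m n \<le> beta t \<and> beta t \<le> M n" if "t \<in> J n" for n t
    using bdd that by (auto simp: m_def M_def intro: cInf_lower cSup_upper)
  obtain m0 where "m0 > 0" and m0: "\<And>t. t \<in> {0..L} \<Longrightarrow> m0 \<le> beta t"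
    using beta_lower_bound by blast
  have "m0 \<le> m n" for n
    unfolding m_def using \<open>J n \<subseteq> {0..L}\<close> \<open>J n \<noteq> {}\<close> m0 by (intro cInf_greatest) auto
  moreover have "m n \<le> M n" for n
    using bounds \<open>J n \<noteq> {}\<close> by fastforce
  moreover obtain n0 where near: "\<forall>n\<ge>n0. \<forall>t\<in>J n. \<bar>g t - g e\<bar> < 1"
    using zero_chain_near_limit[OF chain lim zero_less_one] unfolding J_def by blast
  have "m n * x n \<le> M n * x (Suc n)" if "n \<ge> n0" for n
    unfolding x_def using near that \<open>g e = 1\<close> bounds[of _ n]
    by (intro zero_chain_ratio_step[OF chain]) (force simp: J_def)+
  moreover have "summable (\<lambda>n. M n - m n)"
    using zero_chain_summable_oscillation[OF chain] by (simp add: M_def m_def J_def)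
  moreover have "x n > 0" for n
    using abs_g_zeros[OF zero_chain_mem[OF chain]] by (simp add: x_def abs_less_iff)
  moreover have "x \<longlonglongrightarrow> 0"
  proof -
    have "zs n \<in> {0..L}" for n using zero_chain_mem[OF chain] zeros_subset by blast
    then have "(\<lambda>n. g (zs n)) \<longlonglongrightarrow> g e"
      using continuous_on_tendsto_compose[OF continuous_g lim zero_chain_limit(1)[OF chain lim]] by simp
    then show ?thesis
      using tendsto_diff[OF tendsto_const, of "\<lambda>n. g (zs n)" "g e" sequentially 1] \<open>g e = 1\<close>
      by (simp add: x_def[abs_def])
  qed
  ultimately show False
    using summable_ratio_defect_not_tendsto_zero[of n0 m x M m0] \<open>m0 > 0\<close> by blast
qed

lemma finite_zeros: "finite zeros"
proof (rule ccontr)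
  assume "infinite zeros"
  moreover have "bounded zeros" using zeros_subset bounded_closed_interval bounded_subset by blast
  ultimately obtain zs where "zero_chain zs" "convergent zs"
    using monotone_chain_of_consecutive_points[OF _ _ zeros_isolated closed_zeros_between]
    unfolding zero_chain_def by metis
  then obtain e where "zs \<longlonglongrightarrow> e" by (auto simp: convergent_def)
  then show False
    using zero_chain_limit(2) zero_chain_limit_not_lam zero_chain_limit_not_antipodal \<open>zero_chain zs\<close>
    by blast
qed

end

theorem mainTheorem17:
  fixes L :: real and beta :: "real \<Rightarrow> real" and k :: real
    and tau tau' u u' :: "real \<Rightarrow> 'a::euclidean_space" and lam :: 'a
  assumes dim: "DIM('a) \<ge> 2"
    and L: "L > 0"
    and beta_pos: "\<forall>t\<in>{0..L}. beta t > 0"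
    and beta_bv: "bounded_variation_on {0..L} beta"
    and beta_inv_bdd: "\<exists>B. \<forall>t\<in>{0..L}. 1 / beta t \<le> B"
    and tau_lip: "\<exists>C. C-lipschitz_on {0..L} tau"
    and tau_sphere: "\<forall>t\<in>{0..L}. norm (tau t) = 1"
    and tau_deriv: "AE t in lebesgue_on {0<..<L}. (tau has_vector_derivative tau' t) (at t)"
    and k_def: "esssup (lebesgue_on {0<..<L}) (\<lambda>t. ereal (norm (tau' t))) = ereal k"
    and k_pos: "k > 0"
    and lam: "norm lam = 1"
    and u_lip: "\<exists>C. C-lipschitz_on {0..L} u"
    and u_deriv: "AE t in lebesgue_on {0<..<L}. (u has_vector_derivative u' t) (at t)"
    and u_nonzero: "\<exists>t\<in>{0..L}. u t \<noteq> 0"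
    and eq1: "AE t in lebesgue_on {0<..<L}.
               u' t + (u t \<bullet> tau' t) *\<^sub>R tau t = beta t *\<^sub>R (lam - (lam \<bullet> tau t) *\<^sub>R tau t)"
    and eq2: "AE t in lebesgue_on {0<..<L}. norm (u t) *\<^sub>R tau' t = k *\<^sub>R u t"
    and dep: "\<forall>t\<in>{0..L}. k * norm (u t) > 0 \<longrightarrow>
               (\<forall>d. (tau has_vector_derivative d) (at t within {0..L}) \<longrightarrow>
                  (\<exists>a b c. (a, b, c) \<noteq> (0, 0, 0) \<and> a *\<^sub>R tau t + b *\<^sub>R d + c *\<^sub>R lam = 0))"
    and I: "I \<in> components ({t\<in>{0..L}. tau t \<noteq> lam \<and> tau t \<noteq> - lam} \<union> {t\<in>{0..L}. k * norm (u t) > 0})"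
  shows "finite (I - {t\<in>{0..L}. k * norm (u t) > 0})"
proof -
  interpret standing_component L beta k tau tau' u u' lam I
    by unfold_locales (use assms in simp_all)
  show ?thesis using finite_zeros by (simp add: zeros_def Omega_def)
qed

end
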